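(* Let $\Gamma\subset\mathrm{SL}_2(\mathbb{R})$ be a Fuchsian group acting freely and properly discontinuously on $\mathbb{H}$, let $k$ be an integer, and let $A_\bullet,\tilde A_\bullet\in\mathrm{Z}^1(\Gamma,\mathbb{D}_k)$ be equivalent formal deformation cocycles. Then the deformations of $L_k$ they define are isomorphic; that is, the sheaves $\mathcal{L}_{A}$ and $\mathcal{L}_{\tilde A}$ on $Y_\Gamma$ are isomorphic.
   Context: $Y_\Gamma=\Gamma\backslash\mathbb{H}$ with quotient map $\pi:\mathbb{H}\to Y_\Gamma$; $j_\gamma(\tau)=c\tau+d$; $L_k$ is the line bundle on $Y_\Gamma$ whose sections are weight-$k$ modular forms. $\Gamma$ acts on power series in commuting variables $\rho_1,\dots,\rho_n$ with coefficients in linear differential operators by $(A\|_k\gamma)(\tau,\partial_\tau)=j_\gamma(\tau)^{-k}A(\gamma\tau,\partial_{\gamma\tau})j_\gamma(\tau)^k$, $\partial_{\gamma\tau}=j_\gamma(\tau)^2\partial_\tau$. $\mathfrak{d}_k=\{2p\partial_\tau+kp':p\in\mathbb{C}[\tau],\deg p\le2\}$ with commutator bracket, $\mathfrak{d}_k^\rho=(\rho)\mathfrak{d}_k[[\rho_1,\dots,\rho_n]]$, $\mathbb{D}_k=\exp(\mathfrak{d}_k^\rho)$. A formal deformation cocycle of weight $k$ is $A:\Gamma\to\mathbb{D}_k$ with $A_{\gamma\delta}=(A_\gamma\|_k\delta)A_\delta$; $A,\tilde A$ are equivalent if $\tilde A_\gamma=(C\|_k\gamma)A_\gamma C^{-1}$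 for some $C\in\mathbb{D}_k$ and all $\gamma$. The deformation of $L_k$ defined by $A$ is the sheaf $\mathcal{L}_A$ with $\mathcal{L}_A(U)=\{f:\pi^{-1}(U)\to\mathbb{C}[[\rho_1,\dots,\rho_n]]\ \text{holomorphic}: j_\gamma(\tau)^{-k}f(\gamma\tau)=A_\gamma(\tau,\partial_\tau)f(\tau)\ \forall\gamma\in\Gamma\}$ for open $U\subset Y_\Gamma$. *)

theory Defs
  imports "HOL-Analysis.Analysis"
begin

type_synonym sl2 = "real \<times> real \<times> real \<times> real"  (* (a,b,c,d) = matrix [[a,b],[c,d]] *)

definition SL2R :: "sl2 set" where
  "SL2R = {(a,b,c,d). a*d - b*c = 1}"

definition sl_one :: sl2 where "sl_one = (1,0,0,1)"

fun sl_mult :: "sl2 \<Rightarrow> sl2 \<Rightarrow> sl2" where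
  "sl_mult (a,b,c,d) (a',b',c',d') = (a*a' + b*c', a*b' + b*d', c*a' + d*c', c*b' + d*d')"

fun sl_inv :: "sl2 \<Rightarrow> sl2" where
  "sl_inv (a,b,c,d) = (d, -b, -c, a)"

fun moeb :: "sl2 \<Rightarrow> complex \<Rightarrow> complex" where
  "moeb (a,b,c,d) \<tau> = (of_real a * \<tau> + of_real b) / (of_real c * \<tau> + of_real d)"

fun jfac :: "sl2 \<Rightarrow> complex \<Rightarrow> complex" where
  "jfac (a,b,c,d) \<tau> = of_real c * \<tau> + of_real d"

definition upper_half :: "complex set" where
  "upper_half = {z. Im z > 0}"

definition fuchsian_free_pd :: "sl2 set \<Rightarrow> bool" where
  "fuchsian_free_pd G \<longleftrightarrow>
     G \<subseteq> SL2R \<and> sl_one \<in> G \<and>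
     (\<forall>g\<in>G. \<forall>h\<in>G. sl_mult g h \<in> G) \<and> (\<forall>g\<in>G. sl_inv g \<in> G) \<and>
     (\<forall>g\<in>G. \<exists>e>0. \<forall>h\<in>G. dist h g < e \<longrightarrow> h = g) \<and>
     (\<forall>g\<in>G. \<forall>\<tau>\<in>upper_half. moeb g \<tau> = \<tau> \<longrightarrow> g = sl_one) \<and>
     (\<forall>K. compact K \<and> K \<subseteq> upper_half \<longrightarrow>
          finite {g\<in>G. moeb g ` K \<inter> K \<noteq> {}})"

text \<open>Multi-indices are functions nat => nat vanishing from n on. A (holomorphic-function-valued)
  formal power series is a family of coefficient functions indexed by multi-indices.\<close>
type_synonym mi = "nat \<Rightarrow> nat"
type_synonym fser = "mi \<Rightarrow> complex \<Rightarrow> complex"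

definition multi :: "nat \<Rightarrow> mi set" where
  "multi n = {\<alpha>. \<forall>i\<ge>n. \<alpha> i = 0}"

definition lower :: "nat \<Rightarrow> mi \<Rightarrow> mi set" where
  "lower n \<gamma> = {\<alpha> \<in> multi n. \<forall>i. \<alpha> i \<le> \<gamma> i}"

definition mdeg :: "nat \<Rightarrow> mi \<Rightarrow> nat" where
  "mdeg n \<alpha> = (\<Sum>i<n. \<alpha> i)"

definition mi_diff :: "mi \<Rightarrow> mi \<Rightarrow> mi" where
  "mi_diff \<gamma> \<alpha> = (\<lambda>i. \<gamma> i - \<alpha> i)"

text \<open>Product of a constant power series s in C[[\<rho>]] with a series f.\<close>
definition ps_scale :: "nat \<Rightarrow> (mi \<Rightarrow> complex) \<Rightarrow> fser \<Rightarrow> fser" where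
  "ps_scale n s f = (\<lambda>\<gamma> \<tau>. \<Sum>\<alpha>\<in>lower n \<gamma>. s \<alpha> * f (mi_diff \<gamma> \<alpha>) \<tau>)"

text \<open>An element of d_k is 2p d/d\<tau> + k p' with p = a + b\<tau> + c\<tau>^2, encoded by (a,b,c).\<close>
fun apply_dk :: "int \<Rightarrow> complex \<times> complex \<times> complex \<Rightarrow> (complex \<Rightarrow> complex) \<Rightarrow> complex \<Rightarrow> complex" where
  "apply_dk k (a,b,c) g \<tau> = 2 * (a + b*\<tau> + c*\<tau>^2) * deriv g \<tau> + of_int k * (b + 2*c*\<tau>) * g \<tau>"

text \<open>Elements of d_k^\<rho> = (\<rho>) d_k[[\<rho>]]: coefficient families with vanishing constant term.\<close>
definition dk_rho :: "(mi \<Rightarrow> complex \<times> complex \<times> complex) set" where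
  "dk_rho = {X. X (\<lambda>_. 0) = (0,0,0)}"

definition Xop :: "nat \<Rightarrow> int \<Rightarrow> (mi \<Rightarrow> complex \<times> complex \<times> complex) \<Rightarrow> fser \<Rightarrow> fser" where
  "Xop n k X f = (\<lambda>\<gamma> \<tau>. \<Sum>\<alpha>\<in>lower n \<gamma> - {(\<lambda>_. 0)}. apply_dk k (X \<alpha>) (f (mi_diff \<gamma> \<alpha>)) \<tau>)"

text \<open>exp(X) for X in d_k^\<rho>; the \<rho>^\<gamma>-coefficient of X^m f vanishes for m > |\<gamma>|,
  so the exponential series is a finite sum coefficientwise.\<close>
definition expop :: "nat \<Rightarrow> int \<Rightarrow> (mi \<Rightarrow> complex \<times> complex \<times> complex) \<Rightarrow> fser \<Rightarrow> fser" where
  "expop n k X f = (\<lambda>\<gamma> \<tau>. \<Sum>m\<le>mdeg n \<gamma>. ((Xop n k X ^^ m) f) \<gamma> \<tau> / of_nat (fact m))"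

text \<open>(P ||_k g)(\<tau>,\<partial>_\<tau>) = j_g(\<tau>)^{-k} P(g\<tau>, \<partial>_{g\<tau>}) j_g(\<tau>)^k.\<close>
definition slash :: "int \<Rightarrow> sl2 \<Rightarrow> (fser \<Rightarrow> fser) \<Rightarrow> fser \<Rightarrow> fser" where
  "slash k g P f = (\<lambda>\<beta> \<tau>. jfac g \<tau> powi (-k) *
      P (\<lambda>\<beta>' w. jfac g (moeb (sl_inv g) w) powi k * f \<beta>' (moeb (sl_inv g) w)) \<beta> (moeb g \<tau>))"

definition hol_ser :: "nat \<Rightarrow> complex set \<Rightarrow> fser \<Rightarrow> bool" where
  "hol_ser n V f \<longleftrightarrow> (\<forall>\<beta>\<in>multi n. f \<beta> holomorphic_on V) \<and> (\<forall>\<beta>. \<beta> \<notin> multi n \<longrightarrow> f \<beta> = (\<lambda>_. 0))"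

definition op_eq :: "nat \<Rightarrow> (fser \<Rightarrow> fser) \<Rightarrow> (fser \<Rightarrow> fser) \<Rightarrow> bool" where
  "op_eq n P Q \<longleftrightarrow> (\<forall>f. hol_ser n upper_half f \<longrightarrow>
      (\<forall>\<beta>\<in>multi n. \<forall>\<tau>\<in>upper_half. P f \<beta> \<tau> = Q f \<beta> \<tau>))"

text \<open>A formal deformation cocycle: A_g = exp(LA g) with LA g in d_k^\<rho>.\<close>
definition deform_cocycle :: "nat \<Rightarrow> int \<Rightarrow> sl2 set \<Rightarrow> (sl2 \<Rightarrow> mi \<Rightarrow> complex \<times> complex \<times> complex) \<Rightarrow> bool" where
  "deform_cocycle n k G LA \<longleftrightarrow>
     (\<forall>g\<in>G. LA g \<in> dk_rho) \<and>
     (\<forall>g\<in>G. \<forall>h\<in>G. op_eq n (expop n k (LA (sl_mult g h)))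
                           (slash k h (expop n k (LA g)) \<circ> expop n k (LA h)))"

text \<open>Equivalence: \<tilde>A_g = (C||_k g) A_g C^{-1} with C = exp(Y), C^{-1} = exp(-Y), Y in d_k^\<rho>.\<close>
definition cocycle_equiv :: "nat \<Rightarrow> int \<Rightarrow> sl2 set \<Rightarrow> (sl2 \<Rightarrow> mi \<Rightarrow> complex \<times> complex \<times> complex)
     \<Rightarrow> (sl2 \<Rightarrow> mi \<Rightarrow> complex \<times> complex \<times> complex) \<Rightarrow> bool" where
  "cocycle_equiv n k G LA LB \<longleftrightarrow>
     (\<exists>Y\<in>dk_rho. \<forall>g\<in>G. op_eq n (expop n k (LB g))
         (slash k g (expop n k Y) \<circ> expop n k (LA g) \<circ> expop n k (\<lambda>\<alpha>. - (Y \<alpha>))))"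

text \<open>Open sets U of Y_\<Gamma> = \<Gamma>\H correspond (via V = \<pi>^{-1}(U)) to \<Gamma>-invariant open subsets of H.\<close>
definition inv_open :: "sl2 set \<Rightarrow> complex set \<Rightarrow> bool" where
  "inv_open G V \<longleftrightarrow> open V \<and> V \<subseteq> upper_half \<and> (\<forall>g\<in>G. moeb g ` V \<subseteq> V)"

text \<open>Sections over U, represented as series on V = \<pi>^{-1}(U), extended by 0 outside V.\<close>
definition sections :: "nat \<Rightarrow> int \<Rightarrow> sl2 set \<Rightarrow> (sl2 \<Rightarrow> mi \<Rightarrow> complex \<times> complex \<times> complex) \<Rightarrow> complex set \<Rightarrow> fser set" where
  "sections n k G LA V = {f. hol_ser n V f \<and> (\<forall>\<beta> \<tau>. \<tau> \<notin> V \<longrightarrow> f \<beta> \<tau> = 0) \<and>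
      (\<forall>g\<in>G. \<forall>\<beta>\<in>multi n. \<forall>\<tau>\<in>V. jfac g \<tau> powi (-k) * f \<beta> (moeb g \<tau>) = expop n k (LA g) f \<beta> \<tau>)}"

definition ser_add :: "fser \<Rightarrow> fser \<Rightarrow> fser" where
  "ser_add f f' = (\<lambda>\<beta> \<tau>. f \<beta> \<tau> + f' \<beta> \<tau>)"

definition res :: "complex set \<Rightarrow> fser \<Rightarrow> fser" where
  "res W f = (\<lambda>\<beta> \<tau>. if \<tau> \<in> W then f \<beta> \<tau> else 0)"

definition sheaf_iso :: "nat \<Rightarrow> sl2 set \<Rightarrow> (complex set \<Rightarrow> fser set) \<Rightarrow> (complex set \<Rightarrow> fser set) \<Rightarrow> bool" where
  "sheaf_iso n G F1 F2 \<longleftrightarrow> (\<exists>\<phi> :: complex set \<Rightarrow> fser \<Rightarrow> fser.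
     (\<forall>V. inv_open G V \<longrightarrow>
        bij_betw (\<phi> V) (F1 V) (F2 V) \<and>
        (\<forall>f\<in>F1 V. \<forall>f'\<in>F1 V. \<phi> V (ser_add f f') = ser_add (\<phi> V f) (\<phi> V f')) \<and>
        (\<forall>s. \<forall>f\<in>F1 V. \<phi> V (ps_scale n s f) = ps_scale n s (\<phi> V f))) \<and>
     (\<forall>V W. inv_open G V \<and> inv_open G W \<and> W \<subseteq> V \<longrightarrow>
        (\<forall>f\<in>F1 V. \<phi> W (res W f) = res W (\<phi> V f))))"

end

theory Submission
  imports Defs "HOL-Complex_Analysis.Complex_Analysis"
begin

text \<open>The isomorphism is f \<mapsto> exp(Y) f, where exp(Y) is the operator C realising the equivalence
  \<tilde>A_g = (C |_k g) A_g C\<inverse>; its inverse is f \<mapsto> exp(-Y) f, since on each coefficient the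
  exponential series are finite and multiply like exp(x) exp(-x) = 1. Being differential operators,
  these maps commute with restriction, addition and C[[\<rho>]]-scaling. The one subtle point is that the
  equivalence is an identity of operators tested only on series holomorphic on the whole upper half
  plane, whereas sections live on invariant open subsets. All operators involved are local of finite
  order (each coefficient at \<tau> depends on finitely many derivatives at \<tau> of finitely many
  coefficients), so the identity transfers to local series by replacing them with Taylor
  polynomials.\<close>

lemma mem_lower_iff: "\<alpha> \<in> lower n \<gamma> \<longleftrightarrow> \<alpha> \<in> multi n \<and> \<alpha> \<le> \<gamma>"
  by (simp add: lower_def le_fun_def)

lemma multi_downward_closed:
  assumes "\<beta> \<le> \<gamma>" "\<gamma> \<in> multi n"
  shows "\<beta> \<in> multi n"
proof -
  have "\<beta> i = 0" if "i \<ge> n" for i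
    using assms that le_funD[OF assms(1), of i] by (simp add: multi_def)
  then show ?thesis by (simp add: multi_def)
qed

lemma finite_lower: "finite (lower n \<gamma>)"
proof -
  have "lower n \<gamma> \<subseteq> (\<lambda>f i. if i < n then f i else 0) ` PiE {..<n} (\<lambda>i. {0..\<gamma> i})"
  proof
    fix \<alpha> assume a: "\<alpha> \<in> lower n \<gamma>"
    have e: "\<alpha> = (\<lambda>i. if i < n then restrict \<alpha> {..<n} i else 0)"
      using a unfolding lower_def multi_def fun_eq_iff by simp
    have m: "restrict \<alpha> {..<n} \<in> PiE {..<n} (\<lambda>i. {0..\<gamma> i})"
      using a unfolding restrict_PiE_iff lower_def by simp
    show "\<alpha> \<in> (\<lambda>f i. if i < n then f i else 0) ` PiE {..<n} (\<lambda>i. {0..\<gamma> i})"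
    proof (rule image_eqI[where x="restrict \<alpha> {..<n}"])
      show "restrict \<alpha> {..<n} \<in> PiE {..<n} (\<lambda>i. {0..\<gamma> i})" by (rule m)
      show "\<alpha> = (\<lambda>f i. if i < n then f i else 0) (restrict \<alpha> {..<n})"
        using e by simp
    qed
  qed
  moreover have "finite (PiE {..<n} (\<lambda>i. {0..\<gamma> i}))"
    by (rule finite_PiE) auto
  ultimately show ?thesis using finite_subset by blast
qed

lemma mi_diff_le: "mi_diff \<beta> \<alpha> \<le> \<beta>"
  by (simp add: mi_diff_def le_fun_def)

lemma mi_diff_not_multi: "\<beta> \<notin> multi n \<Longrightarrow> \<alpha> \<in> multi n \<Longrightarrow> mi_diff \<beta> \<alpha> \<notin> multi n"
  by (auto simp: multi_def mi_diff_def)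

lemma mi_diff_commute: "mi_diff (mi_diff \<gamma> \<alpha>) \<delta> = mi_diff (mi_diff \<gamma> \<delta>) \<alpha>"
  by (simp add: mi_diff_def diff_diff_left add.commute)

lemma lower_mi_diff_swap:
  "\<alpha> \<in> lower n \<gamma> \<and> \<delta> \<in> lower n (mi_diff \<gamma> \<alpha>) \<longleftrightarrow> \<delta> \<in> lower n \<gamma> \<and> \<alpha> \<in> lower n (mi_diff \<gamma> \<delta>)"
proof -
  have "\<alpha> i \<le> \<gamma> i \<and> \<delta> i \<le> \<gamma> i - \<alpha> i \<longleftrightarrow> \<delta> i \<le> \<gamma> i \<and> \<alpha> i \<le> \<gamma> i - \<delta> i" for i
    by arith
  then show ?thesis unfolding lower_def mi_diff_def by blast
qed

lemma mdeg_mono: "\<alpha> \<le> \<beta> \<Longrightarrow> mdeg n \<alpha> \<le> mdeg n \<beta>"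
  unfolding mdeg_def le_fun_def by (auto intro: sum_mono)

lemma mdeg_mi_diff: "\<alpha> \<le> \<beta> \<Longrightarrow> mdeg n (mi_diff \<beta> \<alpha>) = mdeg n \<beta> - mdeg n \<alpha>"
proof -
  assume "\<alpha> \<le> \<beta>"
  then have "mdeg n (mi_diff \<beta> \<alpha>) + mdeg n \<alpha> = mdeg n \<beta>"
    unfolding mdeg_def mi_diff_def sum.distrib[symmetric] by (intro sum.cong) (auto simp: le_fun_def)
  then show ?thesis by linarith
qed

lemma mdeg_pos: "\<alpha> \<in> multi n \<Longrightarrow> \<alpha> \<noteq> (\<lambda>_. 0) \<Longrightarrow> mdeg n \<alpha> > 0"
proof -
  assume "\<alpha> \<in> multi n" "\<alpha> \<noteq> (\<lambda>_. 0)"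
  obtain i where "\<alpha> i \<noteq> 0"
    using \<open>\<alpha> \<noteq> (\<lambda>_. 0)\<close> by (auto simp: fun_eq_iff)
  moreover have "i < n"
    using \<open>\<alpha> \<in> multi n\<close> \<open>\<alpha> i \<noteq> 0\<close> by (cases "i < n") (auto simp: multi_def)
  moreover from \<open>i < n\<close> have "\<alpha> i \<le> mdeg n \<alpha>"
    unfolding mdeg_def by (intro member_le_sum) auto
  ultimately show ?thesis by simp
qed

lemma mdeg_mi_diff_less: "\<alpha> \<in> lower n \<beta> - {\<lambda>_. 0} \<Longrightarrow> mdeg n (mi_diff \<beta> \<alpha>) < mdeg n \<beta>"
  using mdeg_mi_diff[of \<alpha> \<beta> n] mdeg_pos[of \<alpha> n] mdeg_mono[of \<alpha> \<beta> n] by (auto simp: mem_lower_iff)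

definition vanishes_to_order :: "complex set \<Rightarrow> complex \<Rightarrow> nat \<Rightarrow> (complex \<Rightarrow> complex) \<Rightarrow> bool" where
  "vanishes_to_order S \<tau> M h \<longleftrightarrow> (\<exists>e. e holomorphic_on S \<and> (\<forall>w\<in>S. h w = (w - \<tau>)^M * e w))"

lemma vanishes_to_order_zero: "vanishes_to_order S \<tau> M (\<lambda>_. 0)"
  unfolding vanishes_to_order_def by (rule exI[of _ "\<lambda>_. 0"]) auto

lemma vanishes_to_order_cong:
  "vanishes_to_order S \<tau> M h \<Longrightarrow> (\<And>w. w \<in> S \<Longrightarrow> h w = h' w) \<Longrightarrow> vanishes_to_order S \<tau> M h'"
  unfolding vanishes_to_order_def by auto

lemma vanishes_to_order_add:
  assumes "vanishes_to_order S \<tau> M h1" "vanishes_to_order S \<tau> M h2"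
  shows "vanishes_to_order S \<tau> M (\<lambda>w. h1 w + h2 w)"
proof -
  obtain e1 e2 where "e1 holomorphic_on S" "\<forall>w\<in>S. h1 w = (w - \<tau>)^M * e1 w"
     "e2 holomorphic_on S" "\<forall>w\<in>S. h2 w = (w - \<tau>)^M * e2 w"
    using assms unfolding vanishes_to_order_def by blast
  then show ?thesis unfolding vanishes_to_order_def
    by (intro exI[of _ "\<lambda>w. e1 w + e2 w"]) (auto intro: holomorphic_intros simp: distrib_left)
qed

lemma vanishes_to_order_mult:
  assumes "g holomorphic_on S" "vanishes_to_order S \<tau> M h"
  shows "vanishes_to_order S \<tau> M (\<lambda>w. g w * h w)"
proof -
  obtain e where "e holomorphic_on S" "\<forall>w\<in>S. h w = (w - \<tau>)^M * e w"
    using assms(2) unfolding vanishes_to_order_def by blast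
  with assms(1) show ?thesis unfolding vanishes_to_order_def
    by (intro exI[of _ "\<lambda>w. g w * e w"]) (auto intro: holomorphic_intros)
qed

lemma vanishes_to_order_sum:
  "finite A \<Longrightarrow> (\<And>a. a \<in> A \<Longrightarrow> vanishes_to_order S \<tau> M (h a))
    \<Longrightarrow> vanishes_to_order S \<tau> M (\<lambda>w. \<Sum>a\<in>A. h a w)"
  by (induction A rule: finite_induct) (auto intro: vanishes_to_order_zero vanishes_to_order_add)

lemma vanishes_to_order_mono:
  assumes "M' \<le> M" "vanishes_to_order S \<tau> M h"
  shows "vanishes_to_order S \<tau> M' h"
proof -
  obtain e where e: "e holomorphic_on S" "\<forall>w\<in>S. h w = (w - \<tau>)^M * e w"
    using assms(2) unfolding vanishes_to_order_def by blast
  have "(w - \<tau>)^M = (w - \<tau>)^M' * (w - \<tau>)^(M - M')" for w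
    using assms(1) by (metis le_add_diff_inverse power_add)
  with e show ?thesis unfolding vanishes_to_order_def
    by (intro exI[of _ "\<lambda>w. (w - \<tau>)^(M - M') * e w"]) (auto intro!: holomorphic_intros)
qed

lemma vanishes_to_order_at_center: "vanishes_to_order S \<tau> (Suc M) h \<Longrightarrow> \<tau> \<in> S \<Longrightarrow> h \<tau> = 0"
  unfolding vanishes_to_order_def by auto

lemma vanishes_to_order_deriv:
  assumes S: "open S" and u: "u holomorphic_on S" and van: "vanishes_to_order S \<tau> (Suc M) u"
  shows "vanishes_to_order S \<tau> M (deriv u)"
proof -
  obtain e where e: "e holomorphic_on S" "\<forall>w\<in>S. u w = (w - \<tau>)^(Suc M) * e w"
    using van unfolding vanishes_to_order_def by blast
  have "deriv u w = (w - \<tau>)^M * (of_nat (Suc M) * e w + (w - \<tau>) * deriv e w)" if w: "w \<in> S" for w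
  proof -
    have "deriv u w = deriv (\<lambda>w. (w - \<tau>)^(Suc M) * e w) w"
      by (rule complex_derivative_transform_within_open[OF u _ S w])
         (use e in \<open>auto intro!: holomorphic_intros\<close>)
    also have "\<dots> = (w - \<tau>)^(Suc M) * deriv e w + of_nat (Suc M) * (w - \<tau>)^M * e w"
    proof (rule DERIV_imp_deriv)
      have de: "(e has_field_derivative deriv e w) (at w)"
        using holomorphic_derivI[OF e(1) S w] by simp
      show "((\<lambda>w. (w - \<tau>) ^ Suc M * e w) has_field_derivative
          (w - \<tau>) ^ Suc M * deriv e w + of_nat (Suc M) * (w - \<tau>) ^ M * e w) (at w)"
        by (rule derivative_eq_intros refl de | simp)+
    qed
    finally show ?thesis by (simp add: algebra_simps)
  qed
  then show ?thesis unfolding vanishes_to_order_def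
    by (intro exI[of _ "\<lambda>w. of_nat (Suc M) * e w + (w - \<tau>) * deriv e w"])
       (use e S in \<open>auto intro!: holomorphic_intros\<close>)
qed

lemma vanishes_to_order_deriv_diff:
  assumes S: "open S" and u: "u holomorphic_on S" and u': "u' holomorphic_on S"
    and van: "vanishes_to_order S \<tau> (Suc M) (\<lambda>w. u w - u' w)"
  shows "vanishes_to_order S \<tau> M (\<lambda>w. deriv u w - deriv u' w)"
proof -
  have "vanishes_to_order S \<tau> M (deriv (\<lambda>w. u w - u' w))"
    by (rule vanishes_to_order_deriv[OF S _ van]) (use u u' in \<open>auto intro: holomorphic_intros\<close>)
  then show ?thesis
    by (rule vanishes_to_order_cong)
       (use u u' S in \<open>auto intro!: deriv_diff holomorphic_on_imp_differentiable_at\<close>)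
qed

lemma vanishes_to_order_compose:
  assumes \<phi>: "\<phi> holomorphic_on ball \<tau> \<rho>" and im: "\<phi> ` ball \<tau> \<rho> \<subseteq> ball \<sigma> r"
    and \<psi>: "\<psi> holomorphic_on ball \<tau> \<rho>" and eq: "\<And>w. w \<in> ball \<tau> \<rho> \<Longrightarrow> \<phi> w - \<sigma> = (w - \<tau>) * \<psi> w"
    and van: "vanishes_to_order (ball \<sigma> r) \<sigma> M h"
  shows "vanishes_to_order (ball \<tau> \<rho>) \<tau> M (\<lambda>w. h (\<phi> w))"
proof -
  obtain e where e: "e holomorphic_on ball \<sigma> r" "\<forall>w\<in>ball \<sigma> r. h w = (w - \<sigma>)^M * e w"
    using van unfolding vanishes_to_order_def by blast
  have "(\<lambda>w. e (\<phi> w)) holomorphic_on ball \<tau> \<rho>"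
    using holomorphic_on_compose_gen[OF \<phi> e(1) im] by (simp add: o_def)
  then have "(\<lambda>w. \<psi> w ^ M * e (\<phi> w)) holomorphic_on ball \<tau> \<rho>"
    using \<psi> by (auto intro!: holomorphic_intros)
  moreover have "h (\<phi> w) = (w - \<tau>)^M * (\<psi> w ^ M * e (\<phi> w))" if w: "w \<in> ball \<tau> \<rho>" for w
  proof -
    have "h (\<phi> w) = (\<phi> w - \<sigma>)^M * e (\<phi> w)" using e(2) im w by blast
    then show ?thesis using eq[OF w] by (simp add: power_mult_distrib)
  qed
  ultimately show ?thesis unfolding vanishes_to_order_def by blast
qed

lemma taylor_polynomial_exists:
  assumes h: "h holomorphic_on ball \<tau> r"
  shows "\<exists>p e. p holomorphic_on UNIV \<and> e holomorphic_on ball \<tau> r \<and>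
           (\<forall>w\<in>ball \<tau> r. h w = p w + (w - \<tau>)^N * e w)"
proof (induction N)
  case 0
  show ?case by (rule exI[of _ "\<lambda>_. 0"], rule exI[of _ h]) (use h in auto)
next
  case (Suc N)
  then obtain p e where pe: "p holomorphic_on UNIV" "e holomorphic_on ball \<tau> r"
    "\<forall>w\<in>ball \<tau> r. h w = p w + (w - \<tau>)^N * e w" by blast
  define q where "q = (\<lambda>z. if z = \<tau> then deriv e \<tau> else (e z - e \<tau>) / (z - \<tau>))"
  have "q holomorphic_on ball \<tau> r"
  proof (cases "r > 0")
    case True
    then show ?thesis unfolding q_def by (intro pole_lemma[OF pe(2)]) auto
  qed (simp add: Elementary_Metric_Spaces.ball_empty holomorphic_on_empty)
  moreover have "(\<lambda>w. p w + e \<tau> * (w - \<tau>) ^ N) holomorphic_on UNIV"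
    using pe(1) by (auto intro!: holomorphic_intros)
  moreover have "\<forall>w\<in>ball \<tau> r. h w = (p w + e \<tau> * (w - \<tau>) ^ N) + (w - \<tau>) ^ Suc N * q w"
  proof
    fix w assume "w \<in> ball \<tau> r"
    moreover have "e w = e \<tau> + (w - \<tau>) * q w"
      by (cases "w = \<tau>") (auto simp: q_def)
    ultimately have "h w = p w + (w - \<tau>)^N * (e \<tau> + (w - \<tau>) * q w)"
      using pe(3) by simp
    then show "h w = (p w + e \<tau> * (w - \<tau>) ^ N) + (w - \<tau>) ^ Suc N * q w"
      by (simp add: algebra_simps)
  qed
  ultimately show ?case by blast
qed

lemma apply_dk_holomorphic:
  assumes "open S" "u holomorphic_on S"
  shows "apply_dk k t u holomorphic_on S"
proof -
  obtain a b c where t: "t = (a,b,c)" by (cases t) auto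
  have "apply_dk k (a,b,c) u
      = (\<lambda>w. 2 * (a + b*w + c*w^2) * deriv u w + of_int k * (b + 2*c*w) * u w)"
    by (rule ext) simp
  then show ?thesis unfolding t using assms by (auto intro!: holomorphic_intros)
qed

lemma apply_dk_vanishes_to_order:
  assumes S: "open S" and u: "u holomorphic_on S" and u': "u' holomorphic_on S"
    and van: "vanishes_to_order S \<tau> (Suc M) (\<lambda>w. u w - u' w)"
  shows "vanishes_to_order S \<tau> M (\<lambda>w. apply_dk k t u w - apply_dk k t u' w)"
proof -
  obtain a b c where t: "t = (a,b,c)" by (cases t) auto
  have "vanishes_to_order S \<tau> M (\<lambda>w. (2 * (a + b*w + c*w^2)) * (deriv u w - deriv u' w)
           + (of_int k * (b + 2*c*w)) * (u w - u' w))"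
    by (intro vanishes_to_order_add vanishes_to_order_mult vanishes_to_order_deriv_diff[OF S u u' van]
        vanishes_to_order_mono[OF _ van]) (auto intro!: holomorphic_intros)
  then show ?thesis unfolding t
    by (rule vanishes_to_order_cong) (simp add: algebra_simps)
qed

lemma apply_dk_zero [simp]: "apply_dk k t (\<lambda>_. 0) w = 0"
  by (cases t) simp

lemma apply_dk_uminus: "apply_dk k (- t) u w = - apply_dk k t u w"
  by (cases t) (simp add: algebra_simps)

lemma apply_dk_cong:
  assumes "open V" "w \<in> V" "\<And>z. z \<in> V \<Longrightarrow> u z = u' z"
  shows "apply_dk k t u w = apply_dk k t u' w"
proof -
  have "deriv u w = deriv u' w"
    using assms by (intro deriv_cong_ev eventually_mono[OF eventually_nhds_in_open]) auto
  then show ?thesis using assms by (cases t) simp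
qed

lemma apply_dk_sum:
  assumes V: "open V" and w: "w \<in> V" and "finite J" and u: "\<And>j. j \<in> J \<Longrightarrow> u j holomorphic_on V"
  shows "apply_dk k t (\<lambda>w. \<Sum>j\<in>J. c j * u j w) w = (\<Sum>j\<in>J. c j * apply_dk k t (u j) w)"
proof -
  have "deriv (\<lambda>w. \<Sum>j\<in>J. c j * u j w) w = (\<Sum>j\<in>J. c j * deriv (u j) w)"
    by (intro DERIV_imp_deriv DERIV_sum DERIV_cmult holomorphic_derivI[OF u V w])
  then show ?thesis
    by (cases t) (simp add: sum_distrib_left sum.distrib algebra_simps)
qed

definition jet_agree :: "mi \<Rightarrow> nat \<Rightarrow> complex \<Rightarrow> real \<Rightarrow> fser \<Rightarrow> fser \<Rightarrow> bool" where
  "jet_agree \<gamma> M \<tau> r f f' \<longleftrightarrow> (\<forall>\<beta>\<le>\<gamma>. f \<beta> holomorphic_on ball \<tau> r \<and> f' \<beta> holomorphic_on ball \<tau> r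
      \<and> vanishes_to_order (ball \<tau> r) \<tau> M (\<lambda>w. f \<beta> w - f' \<beta> w))"

lemma jet_agree_mono: "M' \<le> M \<Longrightarrow> jet_agree \<gamma> M \<tau> r f f' \<Longrightarrow> jet_agree \<gamma> M' \<tau> r f f'"
  unfolding jet_agree_def using vanishes_to_order_mono by blast

lemma jet_agree_of_eq:
  assumes "\<And>\<beta>. \<beta> \<le> \<gamma> \<Longrightarrow> f \<beta> holomorphic_on ball \<tau> r"
    and "\<And>\<beta> w. \<beta> \<le> \<gamma> \<Longrightarrow> w \<in> ball \<tau> r \<Longrightarrow> f \<beta> w = f' \<beta> w"
  shows "jet_agree \<gamma> M \<tau> r f f'"
proof -
  have "f' \<beta> holomorphic_on ball \<tau> r" if "\<beta> \<le> \<gamma>" for \<beta>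
    using assms(1)[OF that] by (rule holomorphic_transform) (use assms(2)[OF that] in auto)
  then show ?thesis
    unfolding jet_agree_def using assms by (auto intro: vanishes_to_order_cong[OF vanishes_to_order_zero])
qed

lemma Xop_holomorphic:
  assumes "open S" and "\<And>\<beta>'. \<beta>' \<le> \<beta> \<Longrightarrow> f \<beta>' holomorphic_on S"
  shows "Xop n k X f \<beta> holomorphic_on S"
  unfolding Xop_def using assms mi_diff_le by (auto intro!: holomorphic_on_sum apply_dk_holomorphic)

lemma jet_agree_Xop:
  assumes agree: "jet_agree \<gamma> (Suc M) \<tau> r f f'"
  shows "jet_agree \<gamma> M \<tau> r (Xop n k X f) (Xop n k X f')"
  unfolding jet_agree_def
proof (intro allI impI conjI)
  fix \<beta> :: mi assume "\<beta> \<le> \<gamma>"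
  then have below: "mi_diff \<beta> \<alpha> \<le> \<gamma>" for \<alpha>
    using mi_diff_le order_trans by blast
  show "Xop n k X f \<beta> holomorphic_on ball \<tau> r" "Xop n k X f' \<beta> holomorphic_on ball \<tau> r"
    using agree \<open>\<beta> \<le> \<gamma>\<close> by (auto intro!: Xop_holomorphic simp: jet_agree_def)
  have "vanishes_to_order (ball \<tau> r) \<tau> M (\<lambda>w. \<Sum>\<alpha>\<in>lower n \<beta> - {\<lambda>_. 0}.
      apply_dk k (X \<alpha>) (f (mi_diff \<beta> \<alpha>)) w - apply_dk k (X \<alpha>) (f' (mi_diff \<beta> \<alpha>)) w)"
    using agree below finite_lower
    by (intro vanishes_to_order_sum apply_dk_vanishes_to_order) (auto simp: jet_agree_def)
  then show "vanishes_to_order (ball \<tau> r) \<tau> M (\<lambda>w. Xop n k X f \<beta> w - Xop n k X f' \<beta> w)"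
    by (rule vanishes_to_order_cong) (simp add: Xop_def sum_subtractf)
qed

lemma jet_agree_Xop_pow:
  "jet_agree \<gamma> (M + m) \<tau> r f f' \<Longrightarrow> jet_agree \<gamma> M \<tau> r ((Xop n k X ^^ m) f) ((Xop n k X ^^ m) f')"
  by (induction m arbitrary: M) (auto intro: jet_agree_Xop)

lemma jet_agree_expop:
  assumes agree: "jet_agree \<gamma> (M + mdeg n \<gamma>) \<tau> r f f'"
  shows "jet_agree \<gamma> M \<tau> r (expop n k X f) (expop n k X f')"
  unfolding jet_agree_def
proof (intro allI impI conjI)
  fix \<beta> :: mi assume \<beta>: "\<beta> \<le> \<gamma>"
  have pow: "jet_agree \<gamma> M \<tau> r ((Xop n k X ^^ m) f) ((Xop n k X ^^ m) f')" if "m \<le> mdeg n \<beta>" for m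
  proof -
    have "m \<le> mdeg n \<gamma>" using that mdeg_mono[OF \<beta>, of n] by simp
    then have "jet_agree \<gamma> ((M + mdeg n \<gamma> - m) + m) \<tau> r f f'" using agree by simp
    then show ?thesis
      by (rule jet_agree_mono[rotated, OF jet_agree_Xop_pow]) (use \<open>m \<le> mdeg n \<gamma>\<close> in simp)
  qed
  then show "expop n k X f \<beta> holomorphic_on ball \<tau> r" "expop n k X f' \<beta> holomorphic_on ball \<tau> r"
    using \<beta> unfolding expop_def jet_agree_def by (auto intro!: holomorphic_intros)
  have "vanishes_to_order (ball \<tau> r) \<tau> M (\<lambda>w. \<Sum>m\<le>mdeg n \<beta>. (1 / of_nat (fact m)) *
       ((Xop n k X ^^ m) f \<beta> w - (Xop n k X ^^ m) f' \<beta> w))"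
    using pow \<beta> by (intro vanishes_to_order_sum vanishes_to_order_mult) (auto simp: jet_agree_def)
  then show "vanishes_to_order (ball \<tau> r) \<tau> M (\<lambda>w. expop n k X f \<beta> w - expop n k X f' \<beta> w)"
    by (rule vanishes_to_order_cong) (simp add: expop_def sum_subtractf[symmetric] diff_divide_distrib)
qed

lemma open_upper_half: "open upper_half"
  unfolding upper_half_def by (simp add: open_halfspace_Im_gt)

lemma jfac_holomorphic: "jfac g holomorphic_on S"
proof -
  have "jfac g = (\<lambda>w. of_real (fst (snd (snd g))) * w + of_real (snd (snd (snd g))))"
    by (cases g) auto
  then show ?thesis by (auto intro!: holomorphic_intros)
qed

lemma jfac_nonzero: "g \<in> SL2R \<Longrightarrow> \<tau> \<in> upper_half \<Longrightarrow> jfac g \<tau> \<noteq> 0"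
proof -
  assume g: "g \<in> SL2R" and \<tau>: "\<tau> \<in> upper_half"
  obtain a b c d where gd: "g = (a,b,c,d)" by (cases g) auto
  show ?thesis
  proof
    assume "jfac g \<tau> = 0"
    then have "Im (of_real c * \<tau> + of_real d) = 0" "Re (of_real c * \<tau> + of_real d) = 0"
      by (simp_all add: gd)
    with \<tau> have "c = 0" "d = 0" by (auto simp: upper_half_def)
    with g gd show False by (simp add: SL2R_def)
  qed
qed

lemma jfac_powi_holomorphic: "g \<in> SL2R \<Longrightarrow> (\<lambda>w. jfac g w powi k) holomorphic_on upper_half"
  using jfac_nonzero by (intro holomorphic_on_power_int jfac_holomorphic) auto

lemma moeb_holomorphic: "g \<in> SL2R \<Longrightarrow> moeb g holomorphic_on upper_half"
proof -
  assume g: "g \<in> SL2R"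
  have "moeb g = (\<lambda>w. (of_real (fst g) * w + of_real (fst (snd g))) / jfac g w)"
    by (cases g) auto
  then show ?thesis
    using jfac_nonzero[OF g] by (auto intro!: holomorphic_intros jfac_holomorphic)
qed

lemma moeb_in_upper_half: "g \<in> SL2R \<Longrightarrow> \<tau> \<in> upper_half \<Longrightarrow> moeb g \<tau> \<in> upper_half"
proof -
  assume g: "g \<in> SL2R" and \<tau>: "\<tau> \<in> upper_half"
  obtain a b c d where gd: "g = (a,b,c,d)" by (cases g) auto
  define y where "y = of_real c * \<tau> + of_real d"
  define x where "x = of_real a * \<tau> + of_real b"
  have "y \<noteq> 0" using jfac_nonzero[OF g \<tau>] by (simp add: gd y_def)
  then have pos: "(Re y)^2 + (Im y)^2 > 0"
    by (simp add: complex_eq_iff sum_power2_gt_zero_iff)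
  have "Im x * Re y - Re x * Im y = Im \<tau> * (a*d - b*c)"
    by (simp add: x_def y_def algebra_simps)
  then have "Im (x / y) = Im \<tau> / ((Re y)^2 + (Im y)^2)"
    using g by (simp add: Im_divide gd SL2R_def)
  moreover have "moeb g \<tau> = x / y" by (simp add: gd x_def y_def)
  ultimately show ?thesis using pos \<tau> by (simp add: upper_half_def)
qed

lemma jfac_moeb_powi_holomorphic:
  assumes "g \<in> SL2R" "h \<in> SL2R"
  shows "(\<lambda>w. jfac g (moeb h w) powi k) holomorphic_on upper_half"
proof -
  have "(jfac g \<circ> moeb h) holomorphic_on upper_half"
    by (rule holomorphic_on_compose[OF moeb_holomorphic[OF assms(2)] jfac_holomorphic])
  then show ?thesis
    using jfac_nonzero[OF assms(1)] moeb_in_upper_half[OF assms(2)]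
    by (intro holomorphic_on_power_int) (auto simp: o_def)
qed

lemma sl_inv_SL2R: "g \<in> SL2R \<Longrightarrow> sl_inv g \<in> SL2R"
  by (cases g) (auto simp: SL2R_def algebra_simps)

lemma sl_inv_sl_inv [simp]: "sl_inv (sl_inv g) = g"
  by (cases g) auto

lemma SL2R_det_complex:
  "g = (a,b,c,d) \<Longrightarrow> g \<in> SL2R \<Longrightarrow> of_real a * of_real d - of_real b * of_real c = (1::complex)"
  by (simp add: SL2R_def) (metis of_real_1 of_real_diff of_real_mult)

lemma moeb_sl_inv_moeb:
  assumes g: "g \<in> SL2R" and \<tau>: "\<tau> \<in> upper_half"
  shows "moeb (sl_inv g) (moeb g \<tau>) = \<tau>"
proof -
  obtain a b c d where gd: "g = (a,b,c,d)" by (cases g) auto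
  define J where "J = of_real c * \<tau> + of_real d"
  define X where "X = of_real a * \<tau> + of_real b"
  have J: "J \<noteq> 0" using jfac_nonzero[OF g \<tau>] by (simp add: gd J_def)
  have det: "of_real a * of_real d - of_real b * of_real c = (1::complex)"
    by (rule SL2R_det_complex[OF gd g])
  have "of_real d * (X / J) - of_real b = \<tau> * (of_real a * of_real d - of_real b * of_real c) / J"
    using J by (simp add: X_def J_def field_simps)
  moreover have "- of_real c * (X / J) + of_real a = (of_real a * of_real d - of_real b * of_real c) / J"
    using J by (simp add: X_def J_def field_simps)
  moreover have "moeb (sl_inv g) (moeb g \<tau>)
      = (of_real d * (X / J) - of_real b) / (- of_real c * (X / J) + of_real a)"
    by (simp add: gd X_def J_def)
  ultimately show ?thesis using J det by simp
qed

lemma moeb_moeb_sl_inv: "g \<in> SL2R \<Longrightarrow> w \<in> upper_half \<Longrightarrow> moeb g (moeb (sl_inv g) w) = w"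
  using moeb_sl_inv_moeb[OF sl_inv_SL2R, of g w] by simp

lemma moeb_diff:
  assumes g: "g \<in> SL2R" and "jfac g w \<noteq> 0" "jfac g \<tau> \<noteq> 0"
  shows "moeb g w - moeb g \<tau> = (w - \<tau>) / (jfac g w * jfac g \<tau>)"
proof -
  obtain a b c d where gd: "g = (a,b,c,d)" by (cases g) auto
  have "moeb g w - moeb g \<tau> = ((of_real a * w + of_real b) * (of_real c * \<tau> + of_real d)
        - (of_real a * \<tau> + of_real b) * (of_real c * w + of_real d)) / (jfac g w * jfac g \<tau>)"
    using assms(2,3) by (simp add: gd field_simps)
  also have "(of_real a * w + of_real b) * (of_real c * \<tau> + of_real d)
        - (of_real a * \<tau> + of_real b) * (of_real c * w + of_real d)
      = (w - \<tau>) * (of_real a * of_real d - of_real b * of_real c)"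
    by (simp add: algebra_simps)
  finally show ?thesis using SL2R_det_complex[OF gd g] by simp
qed

lemma jet_agree_compose:
  assumes agree: "jet_agree \<gamma> M \<sigma> r F F'"
    and \<phi>: "\<phi> holomorphic_on ball \<tau> \<rho>" and im: "\<phi> ` ball \<tau> \<rho> \<subseteq> ball \<sigma> r"
    and \<psi>: "\<psi> holomorphic_on ball \<tau> \<rho>" and eq: "\<And>w. w \<in> ball \<tau> \<rho> \<Longrightarrow> \<phi> w - \<sigma> = (w - \<tau>) * \<psi> w"
    and m: "m holomorphic_on ball \<tau> \<rho>"
  shows "jet_agree \<gamma> M \<tau> \<rho> (\<lambda>\<beta> w. m w * F \<beta> (\<phi> w)) (\<lambda>\<beta> w. m w * F' \<beta> (\<phi> w))"
  unfolding jet_agree_def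
proof (intro allI impI conjI)
  fix \<beta> :: mi assume "\<beta> \<le> \<gamma>"
  then have F: "F \<beta> holomorphic_on ball \<sigma> r" "F' \<beta> holomorphic_on ball \<sigma> r"
    and van: "vanishes_to_order (ball \<sigma> r) \<sigma> M (\<lambda>w. F \<beta> w - F' \<beta> w)"
    using agree by (auto simp: jet_agree_def)
  show "(\<lambda>w. m w * F \<beta> (\<phi> w)) holomorphic_on ball \<tau> \<rho>" "(\<lambda>w. m w * F' \<beta> (\<phi> w)) holomorphic_on ball \<tau> \<rho>"
    using holomorphic_on_compose_gen[OF \<phi> F(1) im] holomorphic_on_compose_gen[OF \<phi> F(2) im] m
    by (auto intro!: holomorphic_intros simp: o_def)
  have "vanishes_to_order (ball \<tau> \<rho>) \<tau> M (\<lambda>w. m w * (F \<beta> (\<phi> w) - F' \<beta> (\<phi> w)))"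
    by (intro vanishes_to_order_mult m vanishes_to_order_compose[OF \<phi> im \<psi> eq van]) auto
  then show "vanishes_to_order (ball \<tau> \<rho>) \<tau> M (\<lambda>w. m w * F \<beta> (\<phi> w) - m w * F' \<beta> (\<phi> w))"
    by (rule vanishes_to_order_cong) (simp add: algebra_simps)
qed

lemma jet_agree_moeb:
  assumes g: "g \<in> SL2R" and \<tau>: "\<tau> \<in> upper_half" and "r > 0"
    and agree: "jet_agree \<gamma> M (moeb g \<tau>) r F F'"
    and m: "m holomorphic_on upper_half"
  shows "\<exists>\<rho>>0. jet_agree \<gamma> M \<tau> \<rho> (\<lambda>\<beta> w. m w * F \<beta> (moeb g w)) (\<lambda>\<beta> w. m w * F' \<beta> (moeb g w))"
proof -
  have "continuous (at \<tau>) (moeb g)"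
    using moeb_holomorphic[OF g] open_upper_half \<tau>
    by (meson continuous_on_eq_continuous_at holomorphic_on_imp_continuous_on)
  then obtain d where d: "d > 0" "moeb g ` ball \<tau> d \<subseteq> ball (moeb g \<tau>) r"
    using \<open>r > 0\<close> unfolding continuous_at_ball by blast
  obtain d' where d': "d' > 0" "ball \<tau> d' \<subseteq> upper_half"
    using open_upper_half \<tau> open_contains_ball by blast
  define \<rho> where "\<rho> = min d d'"
  have H: "ball \<tau> \<rho> \<subseteq> upper_half" and im: "moeb g ` ball \<tau> \<rho> \<subseteq> ball (moeb g \<tau>) r"
    using d d' by (auto simp: \<rho>_def)
  have "jet_agree \<gamma> M \<tau> \<rho> (\<lambda>\<beta> w. m w * F \<beta> (moeb g w)) (\<lambda>\<beta> w. m w * F' \<beta> (moeb g w))"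
  proof (rule jet_agree_compose[OF agree _ im, where \<psi>="\<lambda>w. 1 / (jfac g w * jfac g \<tau>)"])
    show "moeb g holomorphic_on ball \<tau> \<rho>" "m holomorphic_on ball \<tau> \<rho>"
      using moeb_holomorphic[OF g] m H by (auto intro: holomorphic_on_subset)
    show "(\<lambda>w. 1 / (jfac g w * jfac g \<tau>)) holomorphic_on ball \<tau> \<rho>"
      using H jfac_nonzero[OF g] \<tau> by (intro holomorphic_intros jfac_holomorphic) auto
    show "moeb g w - moeb g \<tau> = (w - \<tau>) * (1 / (jfac g w * jfac g \<tau>))" if "w \<in> ball \<tau> \<rho>" for w
      using that H jfac_nonzero[OF g] \<tau> moeb_diff[OF g] by auto
  qed
  moreover have "\<rho> > 0" using d d' by (simp add: \<rho>_def)
  ultimately show ?thesis by blast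
qed

text \<open>For each coefficient index \<gamma> the operator loses at most c orders of contact at \<tau>, as a
  differential operator of order c does.\<close>
definition jet_local :: "(fser \<Rightarrow> fser) \<Rightarrow> bool" where
  "jet_local P \<longleftrightarrow> (\<forall>\<gamma>. \<exists>c. \<forall>\<tau>\<in>upper_half. \<forall>M r f f'. r > 0 \<longrightarrow> jet_agree \<gamma> (M + c) \<tau> r f f'
      \<longrightarrow> (\<exists>r'>0. jet_agree \<gamma> M \<tau> r' (P f) (P f')))"

lemma jet_localD:
  assumes "jet_local P"
  obtains c where "\<And>\<tau> M r f f'. \<tau> \<in> upper_half \<Longrightarrow> r > 0 \<Longrightarrow> jet_agree \<gamma> (M + c) \<tau> r f f'
      \<Longrightarrow> \<exists>r'>0. jet_agree \<gamma> M \<tau> r' (P f) (P f')"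
proof -
  have "\<exists>c. \<forall>\<tau>\<in>upper_half. \<forall>M r f f'. r > 0 \<longrightarrow> jet_agree \<gamma> (M + c) \<tau> r f f'
      \<longrightarrow> (\<exists>r'>0. jet_agree \<gamma> M \<tau> r' (P f) (P f'))"
    using assms unfolding jet_local_def by (rule spec)
  then obtain c where c: "\<forall>\<tau>\<in>upper_half. \<forall>M r f f'. r > 0 \<longrightarrow> jet_agree \<gamma> (M + c) \<tau> r f f'
      \<longrightarrow> (\<exists>r'>0. jet_agree \<gamma> M \<tau> r' (P f) (P f'))" ..
  show thesis by (rule that) (use c in blast)
qed

lemma jet_local_expop: "jet_local (expop n k X)"
  unfolding jet_local_def
proof
  fix \<gamma>
  show "\<exists>c. \<forall>\<tau>\<in>upper_half. \<forall>M r f f'. r > 0 \<longrightarrow> jet_agree \<gamma> (M + c) \<tau> r f f'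
      \<longrightarrow> (\<exists>r'>0. jet_agree \<gamma> M \<tau> r' (expop n k X f) (expop n k X f'))"
  proof (intro exI[of _ "mdeg n \<gamma>"] ballI allI impI)
    fix \<tau> M r f f' assume "r > 0" and agree: "jet_agree \<gamma> (M + mdeg n \<gamma>) \<tau> r f f'"
    then show "\<exists>r'>0. jet_agree \<gamma> M \<tau> r' (expop n k X f) (expop n k X f')"
      using jet_agree_expop[OF agree] by blast
  qed
qed

lemma jet_local_comp:
  assumes "jet_local P" "jet_local Q"
  shows "jet_local (P \<circ> Q)"
  unfolding jet_local_def
proof
  fix \<gamma>
  obtain cP where cP: "\<And>\<tau> M r f f'. \<tau> \<in> upper_half \<Longrightarrow> r > 0 \<Longrightarrow> jet_agree \<gamma> (M + cP) \<tau> r f f'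
      \<Longrightarrow> \<exists>r'>0. jet_agree \<gamma> M \<tau> r' (P f) (P f')"
    using assms(1) by (rule jet_localD[where \<gamma>=\<gamma>]) (rule that)
  obtain cQ where cQ: "\<And>\<tau> M r f f'. \<tau> \<in> upper_half \<Longrightarrow> r > 0 \<Longrightarrow> jet_agree \<gamma> (M + cQ) \<tau> r f f'
      \<Longrightarrow> \<exists>r'>0. jet_agree \<gamma> M \<tau> r' (Q f) (Q f')"
    using assms(2) by (rule jet_localD[where \<gamma>=\<gamma>]) (rule that)
  show "\<exists>c. \<forall>\<tau>\<in>upper_half. \<forall>M r f f'. r > 0 \<longrightarrow> jet_agree \<gamma> (M + c) \<tau> r f f'
      \<longrightarrow> (\<exists>r'>0. jet_agree \<gamma> M \<tau> r' ((P \<circ> Q) f) ((P \<circ> Q) f'))"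
  proof (intro exI[of _ "cP + cQ"] ballI allI impI)
    fix \<tau> M r f f'
    assume \<tau>: "\<tau> \<in> upper_half" and "r > 0" and "jet_agree \<gamma> (M + (cP + cQ)) \<tau> r f f'"
    then obtain r1 where "r1 > 0" "jet_agree \<gamma> (M + cP) \<tau> r1 (Q f) (Q f')"
      using cQ[of \<tau> r "M + cP"] by (auto simp: add.assoc)
    then show "\<exists>r'>0. jet_agree \<gamma> M \<tau> r' ((P \<circ> Q) f) ((P \<circ> Q) f')"
      using cP[OF \<tau>] by simp
  qed
qed

lemma jet_local_slash:
  assumes g: "g \<in> SL2R" and P: "jet_local P"
  shows "jet_local (slash k g P)"
  unfolding jet_local_def
proof
  fix \<gamma>
  obtain c where c: "\<And>\<tau> M r f f'. \<tau> \<in> upper_half \<Longrightarrow> r > 0 \<Longrightarrow> jet_agree \<gamma> (M + c) \<tau> r f f'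
      \<Longrightarrow> \<exists>r'>0. jet_agree \<gamma> M \<tau> r' (P f) (P f')"
    using P by (rule jet_localD[where \<gamma>=\<gamma>]) (rule that)
  define g' where "g' = sl_inv g"
  have g': "g' \<in> SL2R" using sl_inv_SL2R[OF g] by (simp add: g'_def)
  define twist where "twist f = (\<lambda>\<beta> w. jfac g (moeb g' w) powi k * f \<beta> (moeb g' w))" for f :: fser
  have "\<exists>r'>0. jet_agree \<gamma> M \<tau> r' (slash k g P f) (slash k g P f')"
    if \<tau>: "\<tau> \<in> upper_half" and "r > 0" and agree: "jet_agree \<gamma> (M + c) \<tau> r f f'" for \<tau> M r f f'
  proof -
    have g\<tau>: "moeb g \<tau> \<in> upper_half" using moeb_in_upper_half[OF g \<tau>] .
    have "jet_agree \<gamma> (M + c) (moeb g' (moeb g \<tau>)) r f f'"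
      using agree moeb_sl_inv_moeb[OF g \<tau>] by (simp add: g'_def)
    then obtain \<rho> where "\<rho> > 0" "jet_agree \<gamma> (M + c) (moeb g \<tau>) \<rho> (twist f) (twist f')"
      unfolding twist_def
      using jet_agree_moeb[OF g' g\<tau> \<open>r > 0\<close> _ jfac_moeb_powi_holomorphic[OF g g']] by blast
    then obtain r' where "r' > 0" "jet_agree \<gamma> M (moeb g \<tau>) r' (P (twist f)) (P (twist f'))"
      using c[OF g\<tau>] by blast
    from jet_agree_moeb[OF g \<tau> this jfac_powi_holomorphic[OF g]]
    show ?thesis unfolding slash_def twist_def g'_def .
  qed
  then show "\<exists>c. \<forall>\<tau>\<in>upper_half. \<forall>M r f f'. r > 0 \<longrightarrow> jet_agree \<gamma> (M + c) \<tau> r f f'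
      \<longrightarrow> (\<exists>r'>0. jet_agree \<gamma> M \<tau> r' (slash k g P f) (slash k g P f'))"
    by (intro exI[of _ c]) simp
qed

lemma jet_local_finite_order:
  assumes "jet_local P"
  obtains c where "\<And>\<tau> r f f'. \<tau> \<in> upper_half \<Longrightarrow> r > 0 \<Longrightarrow> jet_agree \<gamma> c \<tau> r f f'
    \<Longrightarrow> P f \<gamma> \<tau> = P f' \<gamma> \<tau>"
proof -
  obtain c where c: "\<And>\<tau> M r f f'. \<tau> \<in> upper_half \<Longrightarrow> r > 0 \<Longrightarrow> jet_agree \<gamma> (M + c) \<tau> r f f'
      \<Longrightarrow> \<exists>r'>0. jet_agree \<gamma> M \<tau> r' (P f) (P f')"
    using assms by (rule jet_localD[where \<gamma>=\<gamma>]) (rule that)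
  have "P f \<gamma> \<tau> = P f' \<gamma> \<tau>"
    if \<tau>: "\<tau> \<in> upper_half" and "r > 0" and agree: "jet_agree \<gamma> (Suc 0 + c) \<tau> r f f'"
    for \<tau> r f f'
  proof -
    obtain r' where "r' > 0" "jet_agree \<gamma> (Suc 0) \<tau> r' (P f) (P f')"
      using c[OF \<tau> \<open>r > 0\<close> agree] by blast
    then show ?thesis
      by (auto simp: jet_agree_def dest!: vanishes_to_order_at_center spec[of _ \<gamma>])
  qed
  then show ?thesis by (rule that)
qed

lemma jet_local_eq_at:
  assumes P: "jet_local P" and \<tau>: "\<tau> \<in> upper_half" and "r > 0"
    and f: "\<And>\<beta>. \<beta> \<le> \<gamma> \<Longrightarrow> f \<beta> holomorphic_on ball \<tau> r"
    and eq: "\<And>\<beta> w. \<beta> \<le> \<gamma> \<Longrightarrow> w \<in> ball \<tau> r \<Longrightarrow> f \<beta> w = f' \<beta> w"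
  shows "P f \<gamma> \<tau> = P f' \<gamma> \<tau>"
proof -
  obtain c where "\<And>\<tau> r f f'. \<tau> \<in> upper_half \<Longrightarrow> r > 0 \<Longrightarrow> jet_agree \<gamma> c \<tau> r f f'
      \<Longrightarrow> P f \<gamma> \<tau> = P f' \<gamma> \<tau>"
    by (rule jet_local_finite_order[OF P, where \<gamma>=\<gamma>]) (rule that)
  from this[OF \<tau> \<open>r > 0\<close> jet_agree_of_eq[OF f eq]] show ?thesis .
qed

text \<open>op_eq only tests series holomorphic on the whole upper half plane. Jet-locality transfers it to
  a series h holomorphic only near \<tau>: replace h by a Taylor polynomial of high enough order.\<close>
lemma op_eq_transfer:
  assumes eq: "op_eq n P Q" and P: "jet_local P" and Q: "jet_local Q"
    and \<gamma>: "\<gamma> \<in> multi n" and \<tau>: "\<tau> \<in> upper_half" and "r > 0"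
    and h: "\<And>\<beta>. \<beta> \<le> \<gamma> \<Longrightarrow> h \<beta> holomorphic_on ball \<tau> r"
  shows "P h \<gamma> \<tau> = Q h \<gamma> \<tau>"
proof -
  obtain cP where cP: "\<And>\<tau> r f f'. \<tau> \<in> upper_half \<Longrightarrow> r > 0 \<Longrightarrow> jet_agree \<gamma> cP \<tau> r f f'
      \<Longrightarrow> P f \<gamma> \<tau> = P f' \<gamma> \<tau>"
    by (rule jet_local_finite_order[OF P, where \<gamma>=\<gamma>]) (rule that)
  obtain cQ where cQ: "\<And>\<tau> r f f'. \<tau> \<in> upper_half \<Longrightarrow> r > 0 \<Longrightarrow> jet_agree \<gamma> cQ \<tau> r f f'
      \<Longrightarrow> Q f \<gamma> \<tau> = Q f' \<gamma> \<tau>"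
    by (rule jet_local_finite_order[OF Q, where \<gamma>=\<gamma>]) (rule that)
  define N where "N = max cP cQ"
  have "\<forall>\<beta>. \<exists>p e. \<beta> \<le> \<gamma> \<longrightarrow> p holomorphic_on UNIV \<and> e holomorphic_on ball \<tau> r \<and>
      (\<forall>w\<in>ball \<tau> r. h \<beta> w = p w + (w - \<tau>)^N * e w)"
    using taylor_polynomial_exists[OF h] by blast
  then obtain p e where pe: "\<And>\<beta>. \<beta> \<le> \<gamma> \<Longrightarrow> p \<beta> holomorphic_on UNIV \<and> e \<beta> holomorphic_on ball \<tau> r \<and>
      (\<forall>w\<in>ball \<tau> r. h \<beta> w = p \<beta> w + (w - \<tau>)^N * e \<beta> w)"
    by metis
  define u where "u = (\<lambda>\<beta>. if \<beta> \<le> \<gamma> then p \<beta> else (\<lambda>_. 0))"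
  have "hol_ser n upper_half u"
    using pe multi_downward_closed[OF _ \<gamma>]
    by (auto simp: hol_ser_def u_def intro: holomorphic_on_subset)
  then have "P u \<gamma> \<tau> = Q u \<gamma> \<tau>" using eq \<gamma> \<tau> unfolding op_eq_def by blast
  moreover have "jet_agree \<gamma> N \<tau> r h u"
    unfolding jet_agree_def vanishes_to_order_def using h pe
    by (auto simp: u_def intro: holomorphic_on_subset)
  then have "jet_agree \<gamma> cP \<tau> r h u" "jet_agree \<gamma> cQ \<tau> r h u"
    by (rule jet_agree_mono[rotated], simp add: N_def)+
  ultimately show ?thesis using cP cQ \<tau> \<open>r > 0\<close> by metis
qed

definition ser_holomorphic_on :: "complex set \<Rightarrow> fser \<Rightarrow> bool" where
  "ser_holomorphic_on V f \<longleftrightarrow> (\<forall>\<beta>. f \<beta> holomorphic_on V)"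

definition ser_supported :: "nat \<Rightarrow> fser \<Rightarrow> bool" where
  "ser_supported n f \<longleftrightarrow> (\<forall>\<beta>. \<beta> \<notin> multi n \<longrightarrow> f \<beta> = (\<lambda>_. 0))"

lemma hol_ser_iff: "hol_ser n V f \<longleftrightarrow> ser_holomorphic_on V f \<and> ser_supported n f"
proof -
  have "f \<beta> holomorphic_on V" if "hol_ser n V f" for \<beta>
    using that by (cases "\<beta> \<in> multi n") (auto simp: hol_ser_def)
  then show ?thesis by (auto simp: hol_ser_def ser_holomorphic_on_def ser_supported_def)
qed

lemma ser_holomorphic_on_subset:
  "ser_holomorphic_on V f \<Longrightarrow> S \<subseteq> V \<Longrightarrow> f \<beta> holomorphic_on S"
  unfolding ser_holomorphic_on_def by (blast intro: holomorphic_on_subset)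

lemma ser_holomorphic_Xop: "open V \<Longrightarrow> ser_holomorphic_on V f \<Longrightarrow> ser_holomorphic_on V (Xop n k X f)"
  unfolding ser_holomorphic_on_def by (blast intro: Xop_holomorphic)

lemma ser_holomorphic_Xop_pow:
  "open V \<Longrightarrow> ser_holomorphic_on V f \<Longrightarrow> ser_holomorphic_on V ((Xop n k X ^^ m) f)"
  by (induction m) (auto intro: ser_holomorphic_Xop)

lemma ser_holomorphic_expop: "open V \<Longrightarrow> ser_holomorphic_on V f \<Longrightarrow> ser_holomorphic_on V (expop n k X f)"
  using ser_holomorphic_Xop_pow[of V f] unfolding ser_holomorphic_on_def expop_def
  by (auto intro!: holomorphic_intros)

lemma ser_supported_Xop:
  assumes "ser_supported n f"
  shows "ser_supported n (Xop n k X f)"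
proof -
  have "f (mi_diff \<beta> \<alpha>) = (\<lambda>_. 0)" if "\<beta> \<notin> multi n" "\<alpha> \<in> lower n \<beta>" for \<beta> \<alpha>
    using assms mi_diff_not_multi[OF that(1)] that(2) by (simp add: ser_supported_def mem_lower_iff)
  then show ?thesis unfolding ser_supported_def Xop_def by (auto intro!: ext sum.neutral)
qed

lemma ser_supported_Xop_pow: "ser_supported n f \<Longrightarrow> ser_supported n ((Xop n k X ^^ m) f)"
  by (induction m) (auto intro: ser_supported_Xop)

lemma ser_supported_expop: "ser_supported n f \<Longrightarrow> ser_supported n (expop n k X f)"
  using ser_supported_Xop_pow[of n f] unfolding ser_supported_def expop_def
  by (auto intro!: sum.neutral simp: fun_eq_iff)

lemma Xop_local:
  assumes V: "open V" and eq: "\<And>\<beta>' w. \<beta>' \<le> \<beta> \<Longrightarrow> w \<in> V \<Longrightarrow> f \<beta>' w = f' \<beta>' w" and w: "w \<in> V"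
  shows "Xop n k X f \<beta> w = Xop n k X f' \<beta> w"
  unfolding Xop_def using eq mi_diff_le by (intro sum.cong refl apply_dk_cong[OF V w]) auto

lemma Xop_pow_local:
  assumes V: "open V" and eq: "\<And>\<beta>' w. \<beta>' \<le> \<beta> \<Longrightarrow> w \<in> V \<Longrightarrow> f \<beta>' w = f' \<beta>' w"
  shows "\<beta>' \<le> \<beta> \<Longrightarrow> w \<in> V \<Longrightarrow> (Xop n k X ^^ m) f \<beta>' w = (Xop n k X ^^ m) f' \<beta>' w"
proof (induction m arbitrary: \<beta>' w)
  case 0
  then show ?case using eq by simp
next
  case (Suc m)
  have "Xop n k X ((Xop n k X ^^ m) f) \<beta>' w = Xop n k X ((Xop n k X ^^ m) f') \<beta>' w"
    by (rule Xop_local[OF V _ Suc.prems(2)]) (use Suc order_trans in blast)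
  then show ?case by simp
qed

lemma expop_local:
  assumes "open V" and "\<And>\<beta>' w. \<beta>' \<le> \<beta> \<Longrightarrow> w \<in> V \<Longrightarrow> f \<beta>' w = f' \<beta>' w" and "w \<in> V"
  shows "expop n k X f \<beta> w = expop n k X f' \<beta> w"
  using Xop_pow_local[OF assms(1,2) order_refl assms(3)] by (simp add: expop_def)

lemma Xop_sum:
  assumes V: "open V" and J: "finite J" and F: "\<And>j. j \<in> J \<Longrightarrow> ser_holomorphic_on V (F j)" and w: "w \<in> V"
  shows "Xop n k X (\<lambda>\<beta> w. \<Sum>j\<in>J. c j * F j \<beta> w) \<beta> w = (\<Sum>j\<in>J. c j * Xop n k X (F j) \<beta> w)"
proof -
  have "Xop n k X (\<lambda>\<beta> w. \<Sum>j\<in>J. c j * F j \<beta> w) \<beta> w =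
     (\<Sum>\<alpha>\<in>lower n \<beta> - {\<lambda>_. 0}. \<Sum>j\<in>J. c j * apply_dk k (X \<alpha>) (F j (mi_diff \<beta> \<alpha>)) w)"
    unfolding Xop_def
    by (intro sum.cong refl apply_dk_sum[OF V w J]) (use F in \<open>auto simp: ser_holomorphic_on_def\<close>)
  also have "\<dots> = (\<Sum>j\<in>J. c j * Xop n k X (F j) \<beta> w)"
    by (subst sum.swap) (simp add: Xop_def sum_distrib_left)
  finally show ?thesis .
qed

lemma Xop_pow_sum:
  assumes V: "open V" and J: "finite J" and F: "\<And>j. j \<in> J \<Longrightarrow> ser_holomorphic_on V (F j)"
  shows "w \<in> V \<Longrightarrow> (Xop n k X ^^ m) (\<lambda>\<beta> w. \<Sum>j\<in>J. c j * F j \<beta> w) \<beta> w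
    = (\<Sum>j\<in>J. c j * (Xop n k X ^^ m) (F j) \<beta> w)"
proof (induction m arbitrary: \<beta> w)
  case (Suc m)
  have "(Xop n k X ^^ Suc m) (\<lambda>\<beta> w. \<Sum>j\<in>J. c j * F j \<beta> w) \<beta> w
      = Xop n k X (\<lambda>\<beta> w. \<Sum>j\<in>J. c j * (Xop n k X ^^ m) (F j) \<beta> w) \<beta> w"
    by simp (rule Xop_local[OF V _ Suc.prems], rule Suc.IH)
  also have "\<dots> = (\<Sum>j\<in>J. c j * (Xop n k X ^^ Suc m) (F j) \<beta> w)"
    using Xop_sum[OF V J _ Suc.prems] F ser_holomorphic_Xop_pow[OF V] by simp
  finally show ?case .
qed simp

lemma expop_add:
  assumes V: "open V" and "ser_holomorphic_on V f" "ser_holomorphic_on V f'" and w: "w \<in> V"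
  shows "expop n k X (ser_add f f') \<beta> w = expop n k X f \<beta> w + expop n k X f' \<beta> w"
proof -
  have "(Xop n k X ^^ m) (\<lambda>\<beta> w. \<Sum>j\<in>{True, False}. 1 * (if j then f else f') \<beta> w) \<beta> w
      = (\<Sum>j\<in>{True, False}. 1 * (Xop n k X ^^ m) (if j then f else f') \<beta> w)" for m
    by (rule Xop_pow_sum[OF V _ _ w]) (use assms in auto)
  then show ?thesis by (simp add: expop_def ser_add_def add_divide_distrib sum.distrib)
qed

lemma Xop_cmult:
  assumes "open V" "ser_holomorphic_on V f" "w \<in> V"
  shows "Xop n k X (\<lambda>\<beta> w. a * f \<beta> w) \<beta> w = a * Xop n k X f \<beta> w"
  using Xop_sum[OF assms(1) _ _ assms(3), of "{()}" "\<lambda>_. f" n k X "\<lambda>_. a" \<beta>] assms(2) by simp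

lemma Xop_uminus: "Xop n k (\<lambda>\<alpha>. - X \<alpha>) f \<beta> w = - Xop n k X f \<beta> w"
  by (simp add: Xop_def apply_dk_uminus sum_negf)

lemma Xop_pow_uminus:
  assumes V: "open V" and f: "ser_holomorphic_on V f"
  shows "w \<in> V \<Longrightarrow> (Xop n k (\<lambda>\<alpha>. - X \<alpha>) ^^ m) f \<beta> w = (-1)^m * (Xop n k X ^^ m) f \<beta> w"
proof (induction m arbitrary: \<beta> w)
  case (Suc m)
  have "(Xop n k (\<lambda>\<alpha>. - X \<alpha>) ^^ Suc m) f \<beta> w
      = - Xop n k X (\<lambda>\<beta> w. (-1)^m * (Xop n k X ^^ m) f \<beta> w) \<beta> w"
    by (simp add: Xop_uminus) (rule Xop_local[OF V _ Suc.prems], simp add: Suc.IH)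
  also have "\<dots> = (-1) ^ Suc m * (Xop n k X ^^ Suc m) f \<beta> w"
    by (simp add: Xop_cmult[OF V ser_holomorphic_Xop_pow[OF V f] Suc.prems])
  finally show ?case .
qed simp

lemma Xop_pow_eq_0: "mdeg n \<delta> < m \<Longrightarrow> (Xop n k X ^^ m) f \<delta> = (\<lambda>_. 0)"
proof (induction m arbitrary: \<delta>)
  case (Suc m)
  have "Xop n k X g \<delta> = (\<lambda>_. 0)"
    if "\<And>\<alpha>. \<alpha> \<in> lower n \<delta> - {\<lambda>_. 0} \<Longrightarrow> g (mi_diff \<delta> \<alpha>) = (\<lambda>_. 0)" for g
    unfolding Xop_def by (rule ext, rule sum.neutral) (simp add: that)
  moreover have "(Xop n k X ^^ m) f (mi_diff \<delta> \<alpha>) = (\<lambda>_. 0)" if "\<alpha> \<in> lower n \<delta> - {\<lambda>_. 0}" for \<alpha>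
    using mdeg_mi_diff_less[OF that] Suc by simp
  ultimately show ?case by simp
qed simp

lemma expop_eq_sum:
  "mdeg n \<beta> \<le> N \<Longrightarrow> expop n k X f \<beta> w = (\<Sum>m\<le>N. (Xop n k X ^^ m) f \<beta> w / of_nat (fact m))"
  unfolding expop_def by (rule sum.mono_neutral_left) (auto simp: Xop_pow_eq_0)

lemma alternating_fact_sum:
  assumes "s > 0"
  shows "(\<Sum>j\<le>s. (-1)^j / (fact j * fact (s - j)) :: complex) = 0"
proof -
  have "(\<Sum>j\<le>s. (-1)^j / (fact j * fact (s - j)) :: complex)
      = (\<Sum>j\<le>s. (-1)^j * of_nat (s choose j)) / fact s"
    by (simp add: sum_divide_distrib binomial_fact)
  also have "\<dots> = 0" using choose_alternating_sum[OF assms] by simp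
  finally show ?thesis .
qed

text \<open>The coefficient identity behind exp(x) exp(-x) = 1, for a sequence with finite support.\<close>
lemma exp_series_cancel:
  fixes a :: "nat \<Rightarrow> complex"
  assumes a: "\<And>s. s > N \<Longrightarrow> a s = 0"
  shows "(\<Sum>m\<le>N. (\<Sum>j\<le>N. (-1)^j / fact j * a (m + j)) / fact m) = a 0"
proof -
  define g where "g = (\<lambda>j m. (-1)^j / (fact j * fact m) * a (j + m) :: complex)"
  have "(\<Sum>m\<le>N. (\<Sum>j\<le>N. (-1)^j / fact j * a (m + j)) / fact m) = (\<Sum>m\<le>N. \<Sum>j\<le>N. g j m)"
    by (simp add: g_def sum_divide_distrib add.commute)
  also have "\<dots> = (\<Sum>j\<le>N. \<Sum>m\<le>N. g j m)" by (rule sum.swap)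
  also have "\<dots> = (\<Sum>(j,m)\<in>{..N} \<times> {..N}. g j m)" by (simp add: sum.cartesian_product)
  also have "\<dots> = (\<Sum>(j,m)\<in>{(j,m). j + m \<le> N}. g j m)"
  proof (rule sum.mono_neutral_right)
    have "g j m = 0" if "\<not> j + m \<le> N" for j m
      using a[of "j + m"] that by (simp add: g_def)
    then show "\<forall>i\<in>{..N} \<times> {..N} - {(j,m). j + m \<le> N}. (case i of (j, m) \<Rightarrow> g j m) = 0"
      by auto
  qed auto
  also have "\<dots> = (\<Sum>s\<le>N. \<Sum>j\<le>s. g j (s - j))" by (rule sum.triangle_reindex_eq)
  also have "\<dots> = (\<Sum>s\<le>N. a s * (\<Sum>j\<le>s. (-1)^j / (fact j * fact (s - j))))"
    by (auto simp: g_def sum_distrib_left intro!: sum.cong)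
  also have "\<dots> = (\<Sum>s\<le>N. if s = 0 then a 0 else 0)"
    by (intro sum.cong refl) (auto simp: alternating_fact_sum)
  also have "\<dots> = a 0" by simp
  finally show ?thesis .
qed

lemma expop_expop_uminus:
  assumes V: "open V" and f: "ser_holomorphic_on V f" and w: "w \<in> V"
  shows "expop n k X (expop n k (\<lambda>\<alpha>. - X \<alpha>) f) \<gamma> w = f \<gamma> w"
proof -
  define N where "N = mdeg n \<gamma>"
  define E where "E = (\<lambda>\<beta> w. \<Sum>j\<le>N. ((-1)^j / fact j) * (Xop n k X ^^ j) f \<beta> w)"
  have "expop n k X (expop n k (\<lambda>\<alpha>. - X \<alpha>) f) \<gamma> w = expop n k X E \<gamma> w"
  proof (rule expop_local[OF V _ w])
    fix \<beta> w assume "\<beta> \<le> \<gamma>" "w \<in> V"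
    then show "expop n k (\<lambda>\<alpha>. - X \<alpha>) f \<beta> w = E \<beta> w"
      using expop_eq_sum[of n \<beta> N] mdeg_mono[of \<beta> \<gamma> n] Xop_pow_uminus[OF V f]
      by (simp add: E_def N_def)
  qed
  also have "\<dots> = (\<Sum>m\<le>N. (\<Sum>j\<le>N. (-1)^j / fact j * (Xop n k X ^^ (m + j)) f \<gamma> w) / fact m)"
  proof -
    have "(Xop n k X ^^ m) E \<gamma> w
        = (\<Sum>j\<le>N. ((-1)^j / fact j) * (Xop n k X ^^ m) ((Xop n k X ^^ j) f) \<gamma> w)" for m
      unfolding E_def by (rule Xop_pow_sum[OF V finite_atMost _ w]) (rule ser_holomorphic_Xop_pow[OF V f])
    then show ?thesis by (simp add: expop_eq_sum[of n \<gamma> N] N_def funpow_add)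
  qed
  also have "\<dots> = f \<gamma> w"
    by (subst exp_series_cancel) (auto simp: Xop_pow_eq_0 N_def)
  finally show ?thesis .
qed

lemma Xop_ps_scale:
  assumes V: "open V" and f: "ser_holomorphic_on V f" and w: "w \<in> V"
  shows "Xop n k X (ps_scale n s f) \<gamma> w = ps_scale n s (Xop n k X f) \<gamma> w"
proof -
  define h where "h = (\<lambda>\<alpha> \<delta>. s \<delta> * apply_dk k (X \<alpha>) (f (mi_diff (mi_diff \<gamma> \<alpha>) \<delta>)) w)"
  have "Xop n k X (ps_scale n s f) \<gamma> w = (\<Sum>\<alpha>\<in>lower n \<gamma> - {\<lambda>_. 0}. \<Sum>\<delta>\<in>lower n (mi_diff \<gamma> \<alpha>). h \<alpha> \<delta>)"
    unfolding Xop_def ps_scale_def h_def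
    by (intro sum.cong refl apply_dk_sum[OF V w finite_lower]) (use f in \<open>auto simp: ser_holomorphic_on_def\<close>)
  also have "\<dots> = (\<Sum>(\<alpha>,\<delta>)\<in>Sigma (lower n \<gamma> - {\<lambda>_. 0}) (\<lambda>\<alpha>. lower n (mi_diff \<gamma> \<alpha>)). h \<alpha> \<delta>)"
    by (rule sum.Sigma) (auto simp: finite_lower)
  also have "\<dots> = (\<Sum>(\<delta>,\<alpha>)\<in>Sigma (lower n \<gamma>) (\<lambda>\<delta>. lower n (mi_diff \<gamma> \<delta>) - {\<lambda>_. 0}). h \<alpha> \<delta>)"
    by (rule sum.reindex_bij_witness[where i="\<lambda>(\<delta>,\<alpha>). (\<alpha>,\<delta>)" and j="\<lambda>(\<alpha>,\<delta>). (\<delta>,\<alpha>)"])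
       (use lower_mi_diff_swap in auto)
  also have "\<dots> = (\<Sum>\<delta>\<in>lower n \<gamma>. \<Sum>\<alpha>\<in>lower n (mi_diff \<gamma> \<delta>) - {\<lambda>_. 0}. h \<alpha> \<delta>)"
    by (rule sum.Sigma[symmetric]) (auto simp: finite_lower)
  also have "\<dots> = ps_scale n s (Xop n k X f) \<gamma> w"
    unfolding ps_scale_def Xop_def h_def by (simp add: sum_distrib_left mi_diff_commute)
  finally show ?thesis .
qed

lemma Xop_pow_ps_scale:
  assumes V: "open V" and f: "ser_holomorphic_on V f"
  shows "w \<in> V \<Longrightarrow> (Xop n k X ^^ m) (ps_scale n s f) \<gamma> w = ps_scale n s ((Xop n k X ^^ m) f) \<gamma> w"
proof (induction m arbitrary: \<gamma> w)
  case (Suc m)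
  have "(Xop n k X ^^ Suc m) (ps_scale n s f) \<gamma> w = Xop n k X (ps_scale n s ((Xop n k X ^^ m) f)) \<gamma> w"
    by simp (rule Xop_local[OF V _ Suc.prems], rule Suc.IH)
  also have "\<dots> = ps_scale n s ((Xop n k X ^^ Suc m) f) \<gamma> w"
    using Xop_ps_scale[OF V ser_holomorphic_Xop_pow[OF V f] Suc.prems] by simp
  finally show ?case .
qed simp

lemma expop_ps_scale:
  assumes V: "open V" and f: "ser_holomorphic_on V f" and w: "w \<in> V"
  shows "expop n k X (ps_scale n s f) \<gamma> w = ps_scale n s (expop n k X f) \<gamma> w"
proof -
  have "expop n k X (ps_scale n s f) \<gamma> w
     = (\<Sum>m\<le>mdeg n \<gamma>. \<Sum>\<delta>\<in>lower n \<gamma>. s \<delta> * ((Xop n k X ^^ m) f (mi_diff \<gamma> \<delta>) w / fact m))"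
    unfolding expop_def using Xop_pow_ps_scale[OF V f w]
    by (simp add: ps_scale_def sum_divide_distrib)
  also have "\<dots> = (\<Sum>\<delta>\<in>lower n \<gamma>. s \<delta> * (\<Sum>m\<le>mdeg n \<gamma>. (Xop n k X ^^ m) f (mi_diff \<gamma> \<delta>) w / fact m))"
    by (subst sum.swap) (simp add: sum_distrib_left)
  also have "\<dots> = ps_scale n s (expop n k X f) \<gamma> w"
    unfolding ps_scale_def by (simp add: expop_eq_sum[OF mdeg_mono[OF mi_diff_le]])
  finally show ?thesis .
qed

lemma expop_uminus_expop:
  assumes "open V" "ser_holomorphic_on V f" "w \<in> V"
  shows "expop n k (\<lambda>\<alpha>. - X \<alpha>) (expop n k X f) \<gamma> w = f \<gamma> w"
  using expop_expop_uminus[OF assms, of n k "\<lambda>\<alpha>. - X \<alpha>"] by simp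

lemma holomorphic_on_mult_moeb:
  assumes h: "h \<in> SL2R" and VH: "V \<subseteq> upper_half" and hV: "moeb h ` V \<subseteq> V"
    and u: "u holomorphic_on V" and m: "m holomorphic_on upper_half"
  shows "(\<lambda>w. m w * u (moeb h w)) holomorphic_on V"
proof -
  have "moeb h holomorphic_on V" using moeb_holomorphic[OF h] VH by (rule holomorphic_on_subset)
  then have "(\<lambda>w. u (moeb h w)) holomorphic_on V"
    using holomorphic_on_compose_gen[OF _ u hV] by (simp add: o_def)
  with m VH show ?thesis by (auto intro!: holomorphic_intros intro: holomorphic_on_subset)
qed

lemma slash_expop_local:
  assumes g: "g \<in> SL2R" and \<tau>: "\<tau> \<in> upper_half"
    and eq: "\<And>\<beta>' w. \<beta>' \<le> \<beta> \<Longrightarrow> w \<in> upper_half \<Longrightarrow> W \<beta>' w = W' \<beta>' w"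
  shows "slash k g (expop n k X) W \<beta> \<tau> = slash k g (expop n k X) W' \<beta> \<tau>"
proof -
  have "expop n k X (\<lambda>\<beta>' w. jfac g (moeb (sl_inv g) w) powi k * W \<beta>' (moeb (sl_inv g) w)) \<beta> (moeb g \<tau>)
      = expop n k X (\<lambda>\<beta>' w. jfac g (moeb (sl_inv g) w) powi k * W' \<beta>' (moeb (sl_inv g) w)) \<beta> (moeb g \<tau>)"
    by (rule expop_local[OF open_upper_half _ moeb_in_upper_half[OF g \<tau>]])
       (simp add: eq moeb_in_upper_half[OF sl_inv_SL2R[OF g]])
  then show ?thesis by (simp add: slash_def)
qed

lemma slash_expop_automorphic:
  assumes g: "g \<in> SL2R" and \<tau>: "\<tau> \<in> upper_half"
  shows "slash k g (expop n k X) (\<lambda>\<beta> w. jfac g w powi (-k) * u \<beta> (moeb g w)) \<beta> \<tau>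
       = jfac g \<tau> powi (-k) * expop n k X u \<beta> (moeb g \<tau>)"
proof -
  have "jfac g (moeb (sl_inv g) w) powi k
      * (jfac g (moeb (sl_inv g) w) powi (-k) * u \<beta>' (moeb g (moeb (sl_inv g) w))) = u \<beta>' w"
    if "w \<in> upper_half" for \<beta>' w
    using jfac_nonzero[OF g moeb_in_upper_half[OF sl_inv_SL2R[OF g] that]] moeb_moeb_sl_inv[OF g that]
    by (simp add: power_int_minus power_int_not_zero)
  then have "expop n k X (\<lambda>\<beta>' w. jfac g (moeb (sl_inv g) w) powi k
        * (jfac g (moeb (sl_inv g) w) powi (-k) * u \<beta>' (moeb g (moeb (sl_inv g) w)))) \<beta> (moeb g \<tau>)
      = expop n k X u \<beta> (moeb g \<tau>)"
    by (intro expop_local[OF open_upper_half _ moeb_in_upper_half[OF g \<tau>]]) simp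
  then show ?thesis by (simp add: slash_def)
qed

lemma slash_expop_uminus_slash_expop:
  assumes g: "g \<in> SL2R" and W: "ser_holomorphic_on upper_half W" and \<tau>: "\<tau> \<in> upper_half"
  shows "slash k g (expop n k (\<lambda>\<alpha>. - Y \<alpha>)) (slash k g (expop n k Y) W) \<beta> \<tau> = W \<beta> \<tau>"
proof -
  define W' where "W' = (\<lambda>\<beta> w. jfac g (moeb (sl_inv g) w) powi k * W \<beta> (moeb (sl_inv g) w))"
  have W': "ser_holomorphic_on upper_half W'"
    unfolding W'_def ser_holomorphic_on_def
  proof
    fix \<beta>
    show "(\<lambda>w. jfac g (moeb (sl_inv g) w) powi k * W \<beta> (moeb (sl_inv g) w)) holomorphic_on upper_half"
      by (rule holomorphic_on_mult_moeb[OF sl_inv_SL2R[OF g] order_refl _ _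
            jfac_moeb_powi_holomorphic[OF g sl_inv_SL2R[OF g]]])
         (use W moeb_in_upper_half[OF sl_inv_SL2R[OF g]] in \<open>auto simp: ser_holomorphic_on_def\<close>)
  qed
  have "slash k g (expop n k Y) W = (\<lambda>\<beta> w. jfac g w powi (-k) * expop n k Y W' \<beta> (moeb g w))"
    by (simp add: slash_def W'_def)
  then have "slash k g (expop n k (\<lambda>\<alpha>. - Y \<alpha>)) (slash k g (expop n k Y) W) \<beta> \<tau>
      = jfac g \<tau> powi (-k) * expop n k (\<lambda>\<alpha>. - Y \<alpha>) (expop n k Y W') \<beta> (moeb g \<tau>)"
    using slash_expop_automorphic[OF g \<tau>] by simp
  also have "\<dots> = jfac g \<tau> powi (-k) * W' \<beta> (moeb g \<tau>)"
    using expop_uminus_expop[OF open_upper_half W' moeb_in_upper_half[OF g \<tau>]] by simp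
  also have "\<dots> = W \<beta> \<tau>"
    using moeb_sl_inv_moeb[OF g \<tau>] jfac_nonzero[OF g \<tau>]
    by (simp add: W'_def power_int_minus power_int_not_zero)
  finally show ?thesis .
qed

text \<open>The conjugation is inverted on series holomorphic on the whole upper half plane, where all the
  operators compose and no transfer argument is needed.\<close>
lemma op_eq_conjugate_sym:
  assumes g: "g \<in> SL2R"
    and eq: "op_eq n (expop n k B) (slash k g (expop n k Y) \<circ> expop n k A \<circ> expop n k (\<lambda>\<alpha>. - Y \<alpha>))"
  shows "op_eq n (expop n k A) (slash k g (expop n k (\<lambda>\<alpha>. - Y \<alpha>)) \<circ> expop n k B \<circ> expop n k Y)"
  unfolding op_eq_def
proof (intro allI impI ballI)
  fix f \<beta> \<tau> assume f: "hol_ser n upper_half f" and \<beta>: "\<beta> \<in> multi n" and \<tau>: "\<tau> \<in> upper_half"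
  have fH: "ser_holomorphic_on upper_half f" using f by (simp add: hol_ser_iff)
  have Yf: "hol_ser n upper_half (expop n k Y f)"
    using f by (simp add: hol_ser_iff ser_holomorphic_expop[OF open_upper_half] ser_supported_expop)
  have "expop n k B (expop n k Y f) \<beta>' w = slash k g (expop n k Y) (expop n k A f) \<beta>' w"
    if "\<beta>' \<le> \<beta>" "w \<in> upper_half" for \<beta>' w
  proof -
    have "expop n k B (expop n k Y f) \<beta>' w
        = slash k g (expop n k Y) (expop n k A (expop n k (\<lambda>\<alpha>. - Y \<alpha>) (expop n k Y f))) \<beta>' w"
      using eq Yf multi_downward_closed[OF that(1) \<beta>] that(2) unfolding op_eq_def by simp
    also have "\<dots> = slash k g (expop n k Y) (expop n k A f) \<beta>' w"
      by (intro slash_expop_local[OF g that(2)] expop_local[OF open_upper_half])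
         (simp add: expop_uminus_expop[OF open_upper_half fH])
    finally show ?thesis .
  qed
  then have "slash k g (expop n k (\<lambda>\<alpha>. - Y \<alpha>)) (expop n k B (expop n k Y f)) \<beta> \<tau>
      = slash k g (expop n k (\<lambda>\<alpha>. - Y \<alpha>)) (slash k g (expop n k Y) (expop n k A f)) \<beta> \<tau>"
    by (rule slash_expop_local[OF g \<tau>])
  also have "\<dots> = expop n k A f \<beta> \<tau>"
    by (rule slash_expop_uminus_slash_expop[OF g ser_holomorphic_expop[OF open_upper_half fH] \<tau>])
  finally show "expop n k A f \<beta> \<tau>
      = (slash k g (expop n k (\<lambda>\<alpha>. - Y \<alpha>)) \<circ> expop n k B \<circ> expop n k Y) f \<beta> \<tau>"
    by simp
qed

lemma expop_transformation_law:
  assumes V: "open V" "V \<subseteq> upper_half" and gV: "moeb g ` V \<subseteq> V" and g: "g \<in> SL2R"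
    and eq: "op_eq n (expop n k B) (slash k g (expop n k Y) \<circ> expop n k A \<circ> expop n k (\<lambda>\<alpha>. - Y \<alpha>))"
    and f: "ser_holomorphic_on V f"
    and law: "\<And>\<beta> \<tau>. \<beta> \<in> multi n \<Longrightarrow> \<tau> \<in> V \<Longrightarrow> jfac g \<tau> powi (-k) * f \<beta> (moeb g \<tau>) = expop n k A f \<beta> \<tau>"
    and \<beta>: "\<beta> \<in> multi n" and \<tau>: "\<tau> \<in> V"
  shows "jfac g \<tau> powi (-k) * expop n k Y f \<beta> (moeb g \<tau>) = expop n k B (expop n k Y f) \<beta> \<tau>"
proof -
  obtain r where r: "r > 0" "ball \<tau> r \<subseteq> V" using V(1) \<tau> open_contains_ball by blast
  have \<tau>H: "\<tau> \<in> upper_half" using V \<tau> by blast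
  have Q: "jet_local (slash k g (expop n k Y) \<circ> expop n k A \<circ> expop n k (\<lambda>\<alpha>. - Y \<alpha>))"
    by (intro jet_local_comp jet_local_slash[OF g] jet_local_expop)
  have "expop n k B (expop n k Y f) \<beta> \<tau>
      = (slash k g (expop n k Y) \<circ> expop n k A \<circ> expop n k (\<lambda>\<alpha>. - Y \<alpha>)) (expop n k Y f) \<beta> \<tau>"
    by (rule op_eq_transfer[OF eq jet_local_expop Q \<beta> \<tau>H r(1)])
       (rule ser_holomorphic_on_subset[OF ser_holomorphic_expop[OF V(1) f] r(2)])
  also have "\<dots> = slash k g (expop n k Y) (expop n k A (expop n k (\<lambda>\<alpha>. - Y \<alpha>) (expop n k Y f))) \<beta> \<tau>"
    by simp
  also have "\<dots> = slash k g (expop n k Y) (\<lambda>\<beta> w. jfac g w powi (-k) * f \<beta> (moeb g w)) \<beta> \<tau>"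
  proof (rule jet_local_eq_at[OF jet_local_slash[OF g jet_local_expop] \<tau>H r(1)])
    show "expop n k A (expop n k (\<lambda>\<alpha>. - Y \<alpha>) (expop n k Y f)) \<beta>' holomorphic_on ball \<tau> r" for \<beta>'
      using ser_holomorphic_expop[OF V(1) ser_holomorphic_expop[OF V(1) ser_holomorphic_expop[OF V(1) f]]]
      by (rule ser_holomorphic_on_subset[OF _ r(2)])
    show "expop n k A (expop n k (\<lambda>\<alpha>. - Y \<alpha>) (expop n k Y f)) \<beta>' w = jfac g w powi (-k) * f \<beta>' (moeb g w)"
      if "\<beta>' \<le> \<beta>" "w \<in> ball \<tau> r" for \<beta>' w
    proof -
      have "expop n k A (expop n k (\<lambda>\<alpha>. - Y \<alpha>) (expop n k Y f)) \<beta>' w = expop n k A f \<beta>' w"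
        by (rule expop_local[OF V(1)]) (use expop_uminus_expop[OF V(1) f] that r(2) in auto)
      then show ?thesis using law multi_downward_closed[OF that(1) \<beta>] that(2) r(2) by auto
    qed
  qed
  also have "\<dots> = jfac g \<tau> powi (-k) * expop n k Y f \<beta> (moeb g \<tau>)"
    by (rule slash_expop_automorphic[OF g \<tau>H])
  finally show ?thesis by simp
qed

lemma sections_iff:
  "f \<in> sections n k G L V \<longleftrightarrow> ser_holomorphic_on V f \<and> ser_supported n f \<and> (\<forall>\<beta> \<tau>. \<tau> \<notin> V \<longrightarrow> f \<beta> \<tau> = 0) \<and>
     (\<forall>g\<in>G. \<forall>\<beta>\<in>multi n. \<forall>\<tau>\<in>V. jfac g \<tau> powi (-k) * f \<beta> (moeb g \<tau>) = expop n k (L g) f \<beta> \<tau>)"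
  by (simp add: sections_def hol_ser_iff)

lemma ser_holomorphic_res:
  assumes "ser_holomorphic_on V F"
  shows "ser_holomorphic_on V (res V F)"
  unfolding ser_holomorphic_on_def
proof
  fix \<beta>
  show "res V F \<beta> holomorphic_on V"
    by (rule holomorphic_transform[of "F \<beta>"]) (use assms in \<open>auto simp: ser_holomorphic_on_def res_def\<close>)
qed

lemma ser_supported_res: "ser_supported n F \<Longrightarrow> ser_supported n (res V F)"
  unfolding ser_supported_def res_def by (auto simp: fun_eq_iff)

lemma res_expop_sections:
  assumes G: "G \<subseteq> SL2R" and V: "inv_open G V"
    and eq: "\<And>g. g \<in> G \<Longrightarrow>
      op_eq n (expop n k (B g)) (slash k g (expop n k Y) \<circ> expop n k (A g) \<circ> expop n k (\<lambda>\<alpha>. - Y \<alpha>))"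
    and f: "f \<in> sections n k G A V"
  shows "res V (expop n k Y f) \<in> sections n k G B V"
proof -
  have V': "open V" "V \<subseteq> upper_half" "\<And>g. g \<in> G \<Longrightarrow> moeb g ` V \<subseteq> V"
    using V by (auto simp: inv_open_def)
  have f': "ser_holomorphic_on V f" "ser_supported n f"
    and law: "\<And>g \<beta> \<tau>. g \<in> G \<Longrightarrow> \<beta> \<in> multi n \<Longrightarrow> \<tau> \<in> V
      \<Longrightarrow> jfac g \<tau> powi (-k) * f \<beta> (moeb g \<tau>) = expop n k (A g) f \<beta> \<tau>"
    using f by (auto simp: sections_iff)
  have "ser_holomorphic_on V (res V (expop n k Y f))"
    by (rule ser_holomorphic_res[OF ser_holomorphic_expop[OF V'(1) f'(1)]])
  moreover have "ser_supported n (res V (expop n k Y f))"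
    by (rule ser_supported_res[OF ser_supported_expop[OF f'(2)]])
  moreover have "jfac g \<tau> powi (-k) * res V (expop n k Y f) \<beta> (moeb g \<tau>)
      = expop n k (B g) (res V (expop n k Y f)) \<beta> \<tau>"
    if g: "g \<in> G" and \<beta>: "\<beta> \<in> multi n" and \<tau>: "\<tau> \<in> V" for g \<beta> \<tau>
  proof -
    have "expop n k (B g) (res V (expop n k Y f)) \<beta> \<tau> = expop n k (B g) (expop n k Y f) \<beta> \<tau>"
      by (rule expop_local[OF V'(1) _ \<tau>]) (simp add: res_def)
    moreover have "moeb g \<tau> \<in> V" using V'(3)[OF g] \<tau> by blast
    ultimately show ?thesis
      using expop_transformation_law[OF V'(1,2) V'(3)[OF g] _ eq[OF g] f'(1) law[OF g] \<beta> \<tau>] G g \<tau>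
      by (auto simp: res_def)
  qed
  ultimately show ?thesis by (auto simp: sections_iff res_def)
qed

lemma res_expop_res_expop_uminus:
  assumes V: "open V" and f: "ser_holomorphic_on V f" and out: "\<And>\<beta> \<tau>. \<tau> \<notin> V \<Longrightarrow> f \<beta> \<tau> = 0"
  shows "res V (expop n k X (res V (expop n k (\<lambda>\<alpha>. - X \<alpha>) f))) = f"
proof (intro ext)
  fix \<beta> \<tau>
  show "res V (expop n k X (res V (expop n k (\<lambda>\<alpha>. - X \<alpha>) f))) \<beta> \<tau> = f \<beta> \<tau>"
  proof (cases "\<tau> \<in> V")
    case True
    have "expop n k X (res V (expop n k (\<lambda>\<alpha>. - X \<alpha>) f)) \<beta> \<tau> = expop n k X (expop n k (\<lambda>\<alpha>. - X \<alpha>) f) \<beta> \<tau>"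
      by (rule expop_local[OF V _ True]) (simp add: res_def)
    with True show ?thesis by (simp add: res_def expop_expop_uminus[OF V f])
  qed (simp add: res_def out)
qed

lemma res_expop_add:
  assumes "open V" "ser_holomorphic_on V f" "ser_holomorphic_on V f'"
  shows "res V (expop n k X (ser_add f f')) = ser_add (res V (expop n k X f)) (res V (expop n k X f'))"
  using expop_add[OF assms] by (auto simp: res_def ser_add_def fun_eq_iff)

lemma res_expop_ps_scale:
  assumes "open V" "ser_holomorphic_on V f"
  shows "res V (expop n k X (ps_scale n s f)) = ps_scale n s (res V (expop n k X f))"
  using expop_ps_scale[OF assms] by (auto simp: res_def ps_scale_def fun_eq_iff)

lemma res_expop_res:
  assumes "open W" "W \<subseteq> V"
  shows "res W (expop n k X (res W f)) = res W (res V (expop n k X f))"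
proof -
  have "expop n k X (res W f) \<beta> \<tau> = expop n k X f \<beta> \<tau>" if "\<tau> \<in> W" for \<beta> \<tau>
    by (rule expop_local[OF assms(1) _ that]) (simp add: res_def)
  with assms(2) show ?thesis by (auto simp: res_def fun_eq_iff)
qed

lemma res_expop_bij_betw_sections:
  assumes G: "G \<subseteq> SL2R" and V: "inv_open G V"
    and eq: "\<And>g. g \<in> G \<Longrightarrow>
      op_eq n (expop n k (B g)) (slash k g (expop n k Y) \<circ> expop n k (A g) \<circ> expop n k (\<lambda>\<alpha>. - Y \<alpha>))"
  shows "bij_betw (\<lambda>f. res V (expop n k Y f)) (sections n k G A V) (sections n k G B V)"
proof -
  have eq': "op_eq n (expop n k (A g)) (slash k g (expop n k (\<lambda>\<alpha>. - Y \<alpha>)) \<circ> expop n k (B g)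
      \<circ> expop n k (\<lambda>\<alpha>. - (\<lambda>\<alpha>. - Y \<alpha>) \<alpha>))" if "g \<in> G" for g
    using op_eq_conjugate_sym[OF subsetD[OF G that] eq[OF that]] by simp
  have "open V" using V by (simp add: inv_open_def)
  show ?thesis
    by (rule bij_betwI[where g="\<lambda>h. res V (expop n k (\<lambda>\<alpha>. - Y \<alpha>) h)"])
       (use res_expop_sections[OF G V eq] res_expop_sections[OF G V eq'] \<open>open V\<close>
          res_expop_res_expop_uminus[of V _ n k Y] res_expop_res_expop_uminus[of V _ n k "\<lambda>\<alpha>. - Y \<alpha>"]
        in \<open>auto simp: sections_iff\<close>)
qed

theorem proposition3p6:
  fixes G :: "sl2 set" and n :: nat and k :: int
    and LA LB :: "sl2 \<Rightarrow> mi \<Rightarrow> complex \<times> complex \<times> complex"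
  assumes "fuchsian_free_pd G"
    and "deform_cocycle n k G LA" and "deform_cocycle n k G LB"
    and "cocycle_equiv n k G LA LB"
  shows "sheaf_iso n G (sections n k G LA) (sections n k G LB)"
proof -
  have G: "G \<subseteq> SL2R" using assms(1) by (simp add: fuchsian_free_pd_def)
  obtain Y where eq: "\<And>g. g \<in> G \<Longrightarrow>
      op_eq n (expop n k (LB g)) (slash k g (expop n k Y) \<circ> expop n k (LA g) \<circ> expop n k (\<lambda>\<alpha>. - Y \<alpha>))"
    using assms(4) unfolding cocycle_equiv_def by blast
  show ?thesis
    unfolding sheaf_iso_def
  proof (intro exI[of _ "\<lambda>V f. res V (expop n k Y f)"] conjI allI impI ballI)
    fix V assume V: "inv_open G V"
    then have "open V" by (simp add: inv_open_def)
    show "bij_betw (\<lambda>f. res V (expop n k Y f)) (sections n k G LA V) (sections n k G LB V)"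
      by (rule res_expop_bij_betw_sections[OF G V eq])
    show "res V (expop n k Y (ser_add f f')) = ser_add (res V (expop n k Y f)) (res V (expop n k Y f'))"
      if "f \<in> sections n k G LA V" "f' \<in> sections n k G LA V" for f f'
      using res_expop_add[OF \<open>open V\<close>] that by (simp add: sections_iff)
    show "res V (expop n k Y (ps_scale n s f)) = ps_scale n s (res V (expop n k Y f))"
      if "f \<in> sections n k G LA V" for s f
      using res_expop_ps_scale[OF \<open>open V\<close>] that by (simp add: sections_iff)
  next
    fix V W f assume "inv_open G V \<and> inv_open G W \<and> W \<subseteq> V"
    then show "res W (expop n k Y (res W f)) = res W (res V (expop n k Y f))"
      by (intro res_expop_res) (auto simp: inv_open_def)
  qed
qed

end
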